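(* The admissible, complete, preferred and grounded semantics of fuzzy argumentation frameworks are SCC-recursive, characterized respectively by the following base functions (defined for fuzzy argumentation frameworks $FAF$ with $|SCCS_{FAF}|=1$ and $C\subseteq\mathcal A$): $\mathcal{BF}_{\mathcal{AE}}(FAF,C)=\mathcal{AE}(FAF,C)$; $\mathcal{BF}_{\mathcal{CO}}(FAF,C)=\mathcal{CE}(FAF,C)$; $\mathcal{BF}_{\mathcal{PE}}(FAF,C)=\mathcal{PE}(FAF,C)$; $\mathcal{BF}_{\mathcal{GR}}(FAF,C)=\{GE(FAF,C)\}$. That is, for every fuzzy argumentation framework $FAF=\langle\mathcal A,\rho\rangle$: $\mathcal{AE}(FAF)=\mathcal{GF}_{\mathcal{AE}}(FAF,\mathcal A)$, $\mathcal{CE}(FAF,\mathcal A)=\mathcal{GF}_{\mathcal{CO}}(FAF,\mathcal A)$, $\mathcal{PE}(FAF,\mathcal A)=\mathcal{GF}_{\mathcal{PE}}(FAF,\mathcal A)$, $\{GE(FAF,\mathcal A)\}=\mathcal{GF}_{\mathcal{GR}}(FAF,\mathcal A)$, where $\mathcal{GF}_{\mathcal S}$ is built from the base function $\mathcal{BF}_{\mathcal S}$.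
   Context: Fuzzy sets: a fuzzy set on a crisp set $X$ is a map $S:X\to[0,1]$; $S\subseteq S'$ means $S(x)\le S'(x)$ for all $x$; $\cap,\cup$ are pointwise $\min,\max$; $\mathrm{Supp}(S)=\{x:S(x)>0\}$. A fuzzy point $(x,a)$, $a\in(0,1]$, has value $a$ at $x$ and $0$ elsewhere; $(x,a)\in S$ means $a\le S(x)$. $a*b=\min\{a,b\}$. A fuzzy argumentation framework (FAF) is $\langle\mathcal A,\rho\rangle$ with $\mathrm{Args}$ a crisp set, $\mathcal A$ a fuzzy set on $\mathrm{Args}$, $\rho:\mathrm{Args}\times\mathrm{Args}\to[0,1]$, $\rho_{AB}=\rho(A,B)$; $A$ attacks $B$ iff $\rho_{AB}>0$. Fuzzy arguments are fuzzy points $(A,a)\in\mathcal A$. An attack of $(A,a)$ on $(B,b)$ is tolerable if $\min\{a,\rho_{AB}\}+b\le1$, sufficient otherwise. $(A,a)$ weakens $(B,b)$ to $(B,b')$, $b'=\min\{1-\min\{a,\rho_{AB}\},b\}$. $T\subseteq\mathcal A$ weakening defends $(C,c)$ if for every fuzzy argument $(B,b)$ sufficiently attacking $(C,c)$ there is $(A',a')\in T$ weakening $(B,b)$ to some $(B,b')$ which tolerably attacks $(C,c)$. $T$ is conflict-free if no $(A,a),(B,b)\in T$ with $(A,a)$ sufficiently attacking $(B,b)$; admissible if conflict-free and it weakening defends every element of $T$; $\mathcal{AE}(FAF)$ is the set of admissible sets. For $C\subseteq\mathcal A$: $\mathcal{AE}(FAF,C)$ is the set of admissible $E\subseteq C$;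 $\mathcal{CE}(FAF,C)$ is the set of $E\in\mathcal{AE}(FAF,C)$ such that every fuzzy argument $(A,a)\in C$ weakening defended by $E$ lies in $E$; $\mathcal{PE}(FAF,C)$ is the set of $\subseteq$-maximal elements of $\mathcal{AE}(FAF,C)$; $F_{FAF,C}(T)$ is the union of all fuzzy arguments $(A,a)\in C$ weakening defended by $T$, and $GE(FAF,C)$ is the least fixed point of $F_{FAF,C}$. (With $C=\mathcal A$ these are the complete, preferred and grounded extensions of $FAF$.) Path-equivalence on $\mathrm{Args}$: $A\sim B$ iff $A=B$ or there are chains of attacks from $A$ to $B$ and from $B$ to $A$. $SCC_{FAF}(A)$ is the fuzzy set with value $\mathcal A(B)$ at each $B\sim A$, $0$ elsewhere; $SCCS_{FAF}$ is the set of these. $outparents_{FAF}(S)$ is the fuzzy set of $(B,\mathcal A(B))$ with $B\notin\mathrm{Supp}(S)$ attacking some argument of $\mathrm{Supp}(S)$. For $T\subseteq\mathcal A$, $FAF\downarrow_T=\langle T,\rho|_{\mathrm{Supp}(T)\times\mathrm{Supp}(T)}\rangle$, and notions in $FAF\downarrow_T$ refer to its own fuzzy arguments and attacks. For $E\subseteq\mathcal A$, $S\in SCCS_{FAF}$: $L_{FAF}(S,E)(A)=\max_B\big((E\cap outparents_{FAF}(S))(B)*\rho_{BA}\big)$ for $A\in\mathrm{Supp}(S)$, $0$ elsewhere; $R_{FAF}(S,E)(A)=\min\{\mathcal A(A),1-L_{FAF}(S,E)(A)\}$ for $A\in\mathrm{Supp}(S)$, $0$ elsewhere; $D_{FAF}(S,E)$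 is the union of fuzzy points $(A,a)\in R_{FAF}(S,E)$ such that for every $(B,b)\in outparents_{FAF}(S)$ sufficiently attacking $(A,a)$ there is $(C,c)\in E$ weakening $(B,b)$ to some $(B,b')$ which tolerably attacks $(A,a)$. SCC-recursiveness: given a base function $\mathcal{BF}_{\mathcal S}$ assigning to each FAF with $|SCCS_{FAF}|=1$ and each $C\subseteq\mathcal A$ a set of fuzzy subsets of $\mathcal A$, define recursively for any FAF and $C\subseteq\mathcal A$ the set $\mathcal{GF}_{\mathcal S}(FAF,C)$: a fuzzy set $E\subseteq\mathcal A$ belongs to it iff either $|SCCS_{FAF}|=1$ and $E\in\mathcal{BF}_{\mathcal S}(FAF,C)$, or $|SCCS_{FAF}|\neq1$ and for every $S\in SCCS_{FAF}$, $E\cap S\in\mathcal{GF}_{\mathcal S}(FAF\downarrow_{R_{FAF}(S,E)},D_{FAF}(S,E)\cap C)$. A semantics assigning to each FAF a set of extensions $\mathcal E_{\mathcal S}(FAF)$ is SCC-recursive (with base function $\mathcal{BF}_{\mathcal S}$) iff $\mathcal E_{\mathcal S}(FAF)=\mathcal{GF}_{\mathcal S}(FAF,\mathcal A)$ for every FAF $\langle\mathcal A,\rho\rangle$. *)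

theory Defs
  imports Complex_Main
begin

type_synonym 'a fz = "'a \<Rightarrow> real"

text \<open>A FAF: crisp argument set, fuzzy set of arguments, attack degrees.
  Conventions: the fuzzy set and the attack relation are extended by 0 outside Args.\<close>
record 'a faf =
  args :: "'a set"
  fa   :: "'a \<Rightarrow> real"
  rho  :: "'a \<Rightarrow> 'a \<Rightarrow> real"

definition wf_faf :: "'a faf \<Rightarrow> bool" where
  "wf_faf F \<longleftrightarrow> finite (args F)
     \<and> (\<forall>x. 0 \<le> fa F x \<and> fa F x \<le> 1)
     \<and> (\<forall>x. x \<notin> args F \<longrightarrow> fa F x = 0)
     \<and> (\<forall>x y. 0 \<le> rho F x y \<and> rho F x y \<le> 1)
     \<and> (\<forall>x y. x \<notin> args F \<or> y \<notin> args F \<longrightarrow> rho F x y = 0)"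

definition Supp :: "'a fz \<Rightarrow> 'a set" where
  "Supp S = {x. S x > 0}"

definition fsub :: "'a fz \<Rightarrow> 'a fz \<Rightarrow> bool" where
  "fsub T S \<longleftrightarrow> (\<forall>x. 0 \<le> T x \<and> T x \<le> S x)"

definition fpt_in :: "'a \<Rightarrow> real \<Rightarrow> 'a fz \<Rightarrow> bool" where
  "fpt_in x a S \<longleftrightarrow> 0 < a \<and> a \<le> 1 \<and> a \<le> S x"

definition funion :: "('a \<Rightarrow> real \<Rightarrow> bool) \<Rightarrow> 'a fz" where
  "funion P = (\<lambda>x. Sup (insert 0 {a. P x a}))"

definition sufficient :: "'a faf \<Rightarrow> 'a \<Rightarrow> real \<Rightarrow> 'a \<Rightarrow> real \<Rightarrow> bool" where
  "sufficient F A a B b \<longleftrightarrow> min a (rho F A B) + b > 1"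

definition tolerable :: "'a faf \<Rightarrow> 'a \<Rightarrow> real \<Rightarrow> 'a \<Rightarrow> real \<Rightarrow> bool" where
  "tolerable F A a B b \<longleftrightarrow> min a (rho F A B) + b \<le> 1"

definition weaken :: "'a faf \<Rightarrow> 'a \<Rightarrow> real \<Rightarrow> 'a \<Rightarrow> real \<Rightarrow> real" where
  "weaken F A a B b = min (1 - min a (rho F A B)) b"

definition wdefends :: "'a faf \<Rightarrow> 'a fz \<Rightarrow> 'a \<Rightarrow> real \<Rightarrow> bool" where
  "wdefends F T C c \<longleftrightarrow>
     (\<forall>B b. fpt_in B b (fa F) \<and> sufficient F B b C c \<longrightarrow>
        (\<exists>A' a'. fpt_in A' a' T \<and> tolerable F B (weaken F A' a' B b) C c))"

definition conflict_free :: "'a faf \<Rightarrow> 'a fz \<Rightarrow> bool" where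
  "conflict_free F T \<longleftrightarrow>
     \<not> (\<exists>A a B b. fpt_in A a T \<and> fpt_in B b T \<and> sufficient F A a B b)"

definition admissible :: "'a faf \<Rightarrow> 'a fz \<Rightarrow> bool" where
  "admissible F T \<longleftrightarrow> fsub T (fa F) \<and> conflict_free F T
     \<and> (\<forall>C c. fpt_in C c T \<longrightarrow> wdefends F T C c)"

definition AE :: "'a faf \<Rightarrow> 'a fz \<Rightarrow> 'a fz set" where
  "AE F C = {E. admissible F E \<and> fsub E C}"

definition AE0 :: "'a faf \<Rightarrow> 'a fz set" where
  "AE0 F = {E. admissible F E}"

definition CE :: "'a faf \<Rightarrow> 'a fz \<Rightarrow> 'a fz set" where
  "CE F C = {E \<in> AE F C. \<forall>A a. fpt_in A a C \<and> wdefends F E A a \<longrightarrow> fpt_in A a E}"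

definition PE :: "'a faf \<Rightarrow> 'a fz \<Rightarrow> 'a fz set" where
  "PE F C = {E \<in> AE F C. \<forall>E' \<in> AE F C. fsub E E' \<longrightarrow> E' = E}"

definition Fop :: "'a faf \<Rightarrow> 'a fz \<Rightarrow> 'a fz \<Rightarrow> 'a fz" where
  "Fop F C T = funion (\<lambda>A a. fpt_in A a C \<and> wdefends F T A a)"

definition GE :: "'a faf \<Rightarrow> 'a fz \<Rightarrow> 'a fz" where
  "GE F C = (THE E. Fop F C E = E \<and> (\<forall>E'. Fop F C E' = E' \<longrightarrow> (\<forall>x. E x \<le> E' x)))"

definition attR :: "'a faf \<Rightarrow> ('a \<times> 'a) set" where
  "attR F = {(x, y). x \<in> args F \<and> y \<in> args F \<and> rho F x y > 0}"

definition pequiv :: "'a faf \<Rightarrow> 'a \<Rightarrow> 'a \<Rightarrow> bool" where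
  "pequiv F A B \<longleftrightarrow> A = B \<or> ((A, B) \<in> (attR F)\<^sup>+ \<and> (B, A) \<in> (attR F)\<^sup>+)"

definition SCC :: "'a faf \<Rightarrow> 'a \<Rightarrow> 'a fz" where
  "SCC F A = (\<lambda>B. if pequiv F B A then fa F B else 0)"

definition SCCS :: "'a faf \<Rightarrow> 'a fz set" where
  "SCCS F = SCC F ` args F"

definition outparents :: "'a faf \<Rightarrow> 'a fz \<Rightarrow> 'a fz" where
  "outparents F S = (\<lambda>B. if B \<in> args F \<and> B \<notin> Supp S \<and> (\<exists>A \<in> Supp S. rho F B A > 0)
                          then fa F B else 0)"

definition restrict :: "'a faf \<Rightarrow> 'a fz \<Rightarrow> 'a faf" where
  "restrict F T = \<lparr> args = Supp T, fa = T,
     rho = (\<lambda>x y. if x \<in> Supp T \<and> y \<in> Supp T then rho F x y else 0) \<rparr>"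

definition Lf :: "'a faf \<Rightarrow> 'a fz \<Rightarrow> 'a fz \<Rightarrow> 'a fz" where
  "Lf F S E = (\<lambda>A. if A \<in> Supp S then
       Max (insert 0 ((\<lambda>B. min (min (E B) (outparents F S B)) (rho F B A)) ` args F))
     else 0)"

definition Rf :: "'a faf \<Rightarrow> 'a fz \<Rightarrow> 'a fz \<Rightarrow> 'a fz" where
  "Rf F S E = (\<lambda>A. if A \<in> Supp S then min (fa F A) (1 - Lf F S E A) else 0)"

definition Df :: "'a faf \<Rightarrow> 'a fz \<Rightarrow> 'a fz \<Rightarrow> 'a fz" where
  "Df F S E = funion (\<lambda>A a. fpt_in A a (Rf F S E) \<and>
      (\<forall>B b. fpt_in B b (outparents F S) \<and> sufficient F B b A a \<longrightarrow>
         (\<exists>C c. fpt_in C c E \<and> tolerable F B (weaken F C c B b) A a)))"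

type_synonym 'a basefun = "'a faf \<Rightarrow> 'a fz \<Rightarrow> 'a fz set"

text \<open>The recursion is well-founded for finite frameworks because in the non-base case
  every restricted framework has strictly fewer arguments. We implement it with a fuel
  parameter, and start with fuel = card Args, which always suffices.\<close>
fun GFf :: "nat \<Rightarrow> 'a basefun \<Rightarrow> 'a faf \<Rightarrow> 'a fz \<Rightarrow> 'a fz set" where
  "GFf 0 bf F C = {E. fsub E (fa F) \<and>
      (if card (SCCS F) = 1 then E \<in> bf F C else SCCS F = {})}"
| "GFf (Suc n) bf F C = {E. fsub E (fa F) \<and>
      (if card (SCCS F) = 1 then E \<in> bf F C
       else (\<forall>S \<in> SCCS F. (\<lambda>x. min (E x) (S x)) \<in>
               GFf n bf (restrict F (Rf F S E)) (\<lambda>x. min (Df F S E x) (C x))))}"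

definition GF :: "'a basefun \<Rightarrow> 'a faf \<Rightarrow> 'a fz \<Rightarrow> 'a fz set" where
  "GF bf F C = GFf (card (args F)) bf F C"

definition BF_AE :: "'a basefun" where "BF_AE F C = AE F C"
definition BF_CO :: "'a basefun" where "BF_CO F C = CE F C"
definition BF_PE :: "'a basefun" where "BF_PE F C = PE F C"
definition BF_GR :: "'a basefun" where "BF_GR F C = {GE F C}"

end

theory Submission
  imports Defs
begin

text \<open>
  Fix an SCC \<open>S\<close> and an extension \<open>E\<close>. The rest of \<open>E\<close> acts on \<open>S\<close> only through the
  strongest attack \<open>L(S,E)\<close> it sends into \<open>S\<close>, which caps the arguments of \<open>S\<close> at \<open>R(S,E)\<close>,
  and through \<open>D(S,E)\<close>, the part of \<open>R(S,E)\<close> that \<open>E\<close> defends against attackers outside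
  \<open>S\<close>. Two transfer lemmas carry the proof. If a part \<open>X\<close> of a conflict-free \<open>E\<close> defends
  \<open>(x,a)\<close> with \<open>x\<close> in \<open>S\<close>, then \<open>(x,a)\<close> lies in \<open>D(S,E)\<close> and \<open>X \<inter> S\<close> defends it in the
  framework restricted to \<open>R(S,E)\<close>; conversely, a point of \<open>D(S,E)\<close> defended inside
  \<open>R(S,E)\<close> is defended in the whole framework. These yield the decompositions of admissible
  and complete extensions. For preferred and grounded extensions one also needs uniqueness,
  which follows by well-founded induction along the strict upstream order of the finite
  framework, because \<open>R(S,E)\<close> and \<open>D(S,E)\<close> depend only on \<open>E\<close> strictly upstream of \<open>S\<close>.
  Finiteness also makes the degrees to which a point is defended closed under suprema, so the
  fuzzy unions defining \<open>D(S,E)\<close> and the characteristic function consist of defended points.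
\<close>

abbreviation finter :: "'a fz \<Rightarrow> 'a fz \<Rightarrow> 'a fz" where
  "finter E S \<equiv> \<lambda>x. min (E x) (S x)"

abbreviation local_faf :: "'a faf \<Rightarrow> 'a fz \<Rightarrow> 'a fz \<Rightarrow> 'a faf" where
  "local_faf F S E \<equiv> restrict F (Rf F S E)"

lemma Supp_iff: "x \<in> Supp S \<longleftrightarrow> S x > 0"
  unfolding Supp_def by simp

lemma fsub_trans: "fsub X Y \<Longrightarrow> fsub Y Z \<Longrightarrow> fsub X Z"
  unfolding fsub_def by (meson order_trans)

lemma fsub_self: "fsub E G \<Longrightarrow> fsub E E"
  unfolding fsub_def by simp

lemma fsub_nonneg: "fsub E G \<Longrightarrow> 0 \<le> E x"
  unfolding fsub_def by simp

lemma fsub_le: "fsub E G \<Longrightarrow> E x \<le> G x"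
  unfolding fsub_def by simp

lemma fpt_in_le: "fpt_in x a E \<Longrightarrow> a \<le> E x"
  unfolding fpt_in_def by simp

lemma fpt_in_mono: "fpt_in x a X \<Longrightarrow> (\<And>y. X y \<le> Y y) \<Longrightarrow> fpt_in x a Y"
  unfolding fpt_in_def by (meson order_trans)

lemma fpt_in_fsub: "fpt_in x a E \<Longrightarrow> fsub E G \<Longrightarrow> fpt_in x a G"
  unfolding fsub_def fpt_in_def by (meson order_trans)

lemma fpt_in_Supp: "fpt_in x a E \<Longrightarrow> x \<in> Supp E"
  unfolding fpt_in_def Supp_def by auto

lemma fpt_in_value: "0 < E x \<Longrightarrow> E x \<le> 1 \<Longrightarrow> fpt_in x (E x) E"
  unfolding fpt_in_def by simp

lemma fpt_in_max: "fpt_in x a (\<lambda>y. max (E y) (T y)) \<Longrightarrow> fpt_in x a E \<or> fpt_in x a T"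
  unfolding fpt_in_def by (cases "E x \<le> T x") (auto simp: max_def)

lemma fpt_in_finter: "fpt_in x a (finter T U) \<longleftrightarrow> fpt_in x a T \<and> fpt_in x a U"
  unfolding fpt_in_def by auto

lemma fsub_finter: "fsub T G \<Longrightarrow> fsub T H \<Longrightarrow> fsub T (finter G H)"
  unfolding fsub_def by simp

lemma fsub_finterD2: "fsub T (finter G H) \<Longrightarrow> fsub T H"
  unfolding fsub_def by simp

lemma fsub_max: "fsub E G \<Longrightarrow> fsub T G \<Longrightarrow> fsub (\<lambda>x. max (E x) (T x)) G"
  unfolding fsub_def by (simp add: le_max_iff_disj)

lemma fsub_by_fpt_in:
  assumes "\<And>x. 0 \<le> T x" "\<And>x. T x \<le> 1" "\<And>x. 0 \<le> G x"
    and "\<And>x a. fpt_in x a T \<Longrightarrow> fpt_in x a G"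
  shows "fsub T G"
  unfolding fsub_def
proof
  fix x
  show "0 \<le> T x \<and> T x \<le> G x"
  proof (cases "T x > 0")
    case True
    then have "fpt_in x (T x) T"
      using assms(2)[of x] by (rule fpt_in_value)
    then have "T x \<le> G x"
      by (intro fpt_in_le assms(4))
    then show ?thesis
      using assms(1)[of x] by simp
  next
    case False
    then show ?thesis
      using assms(1,3)[of x] by linarith
  qed
qed

lemma funion_upper: "P x a \<Longrightarrow> (\<And>a. P x a \<Longrightarrow> a \<le> 1) \<Longrightarrow> a \<le> funion P x"
  unfolding funion_def by (rule cSup_upper) (auto intro!: bdd_aboveI[of _ 1])

lemma funion_nonneg: "(\<And>a. P x a \<Longrightarrow> a \<le> 1) \<Longrightarrow> 0 \<le> funion P x"
  unfolding funion_def by (rule cSup_upper) (auto intro!: bdd_aboveI[of _ 1])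

lemma funion_least: "(\<And>a. P x a \<Longrightarrow> a \<le> z) \<Longrightarrow> 0 \<le> z \<Longrightarrow> funion P x \<le> z"
  unfolding funion_def by (rule cSup_least) auto

lemma funion_approx:
  assumes "0 < c" "c \<le> funion P x" "\<And>a. P x a \<Longrightarrow> a \<le> 1" "\<epsilon> > 0"
  shows "\<exists>a. c - \<epsilon> < a \<and> P x a"
proof -
  define e where "e = min \<epsilon> c"
  have e: "0 < e" "e \<le> \<epsilon>" "e \<le> c"
    using assms unfolding e_def by auto
  have "bdd_above (insert 0 {a. P x a})"
    using assms(3) by (auto intro!: bdd_aboveI[of _ 1])
  moreover have "c - e < Sup (insert 0 {a. P x a})"
    using assms(2) e unfolding funion_def by simp
  ultimately obtain y where y: "y \<in> insert 0 {a. P x a}" "c - e < y"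
    by (meson insert_not_empty less_cSup_iff)
  then have "P x y"
    using e by auto
  with y(2) e(2) show ?thesis
    by (intro exI[of _ y]) simp
qed

lemma not_tolerable_iff_sufficient: "\<not> tolerable F B b C c \<longleftrightarrow> sufficient F B b C c"
  unfolding tolerable_def sufficient_def by auto

lemma sufficient_rho_pos: "sufficient F B b C c \<Longrightarrow> c \<le> 1 \<Longrightarrow> 0 < rho F B C \<and> 0 < b"
  unfolding sufficient_def by (auto simp: min_def split: if_splits)

lemma sufficient_of_weaken_tolerable:
  "sufficient F B b C c \<Longrightarrow> tolerable F B (weaken F A a B b) C c \<Longrightarrow> sufficient F A a B b"
  unfolding sufficient_def tolerable_def weaken_def by (auto simp: min_def split: if_splits)

lemma weaken_less_iff_sufficient: "weaken F A a B b < b \<longleftrightarrow> sufficient F A a B b"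
  unfolding weaken_def sufficient_def by auto

lemma weaken_antimono: "a \<le> a' \<Longrightarrow> weaken F A a' B b \<le> weaken F A a B b"
  unfolding weaken_def by (auto simp: min_def)

lemma tolerable_antimono: "w \<le> w' \<Longrightarrow> tolerable F B w' C c \<Longrightarrow> tolerable F B w C c"
  unfolding tolerable_def by (meson add_right_mono min.mono order.refl order_trans)

definition defends_against :: "'a faf \<Rightarrow> 'a fz \<Rightarrow> 'a fz \<Rightarrow> 'a \<Rightarrow> real \<Rightarrow> bool" where
  "defends_against F Att E A a \<longleftrightarrow> (\<forall>B b. fpt_in B b Att \<and> sufficient F B b A a \<longrightarrow>
      (\<exists>C c. fpt_in C c E \<and> tolerable F B (weaken F C c B b) A a))"

lemma wdefends_eq_defends_against: "wdefends F T C c = defends_against F (fa F) T C c"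
  unfolding wdefends_def defends_against_def by simp

lemma Df_eq_funion:
  "Df F S E = funion (\<lambda>A a. fpt_in A a (Rf F S E) \<and> defends_against F (outparents F S) E A a)"
  unfolding Df_def defends_against_def by simp

lemma Fop_eq_funion: "Fop F C T = funion (\<lambda>A a. fpt_in A a C \<and> defends_against F (fa F) T A a)"
  unfolding Fop_def wdefends_eq_defends_against by simp

lemma defends_against_mono:
  "defends_against F Att E A a \<Longrightarrow> (\<And>x. E x \<le> E' x) \<Longrightarrow> defends_against F Att E' A a"
  unfolding defends_against_def fpt_in_def by (meson order_trans)

lemma defends_against_antimono_attackers:
  "defends_against F Att E A a \<Longrightarrow> (\<And>B b. fpt_in B b Att' \<Longrightarrow> fpt_in B b Att)
   \<Longrightarrow> defends_against F Att' E A a"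
  unfolding defends_against_def by blast

lemma wdefends_mono: "wdefends F T C c \<Longrightarrow> (\<And>x. T x \<le> T' x) \<Longrightarrow> wdefends F T' C c"
  unfolding wdefends_eq_defends_against by (rule defends_against_mono)

text \<open>With finitely many defenders, a sufficient attack that no defender tames has a positive
  margin, and the same attack is then untamed on every degree close to \<open>c\<close>.\<close>

lemma defends_against_Sup:
  assumes fin: "finite {C. E C > 0}" and E1: "\<And>x. E x \<le> 1"
    and approx: "\<And>\<epsilon>. \<epsilon> > 0 \<Longrightarrow> \<exists>a. c - \<epsilon> < a \<and> defends_against F Att E A a"
  shows "defends_against F Att E A c"
  unfolding defends_against_def
proof (intro allI impI)
  fix B b assume Bb: "fpt_in B b Att \<and> sufficient F B b A c"
  show "\<exists>C c'. fpt_in C c' E \<and> tolerable F B (weaken F C c' B b) A c"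
  proof (rule ccontr)
    assume untamed: "\<not> ?thesis"
    define K where "K = {C. E C > 0}"
    define t where "t = (\<lambda>C. min (weaken F C (E C) B b) (rho F B A))"
    have tK: "1 < t C + c" if "C \<in> K" for C
      using untamed fpt_in_value[of E C] E1[of C] that
      unfolding K_def t_def tolerable_def by fastforce
    define \<epsilon> where "\<epsilon> = Min (insert (min b (rho F B A) + c - 1) ((\<lambda>C. t C + c - 1) ` K))"
    have "finite K"
      using fin K_def by simp
    then have \<epsilon>: "0 < \<epsilon>" "\<epsilon> \<le> min b (rho F B A) + c - 1" "\<And>C. C \<in> K \<Longrightarrow> \<epsilon> \<le> t C + c - 1"
      using Bb tK unfolding \<epsilon>_def sufficient_def by auto
    obtain a where a: "c - \<epsilon> < a" "defends_against F Att E A a"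
      using approx \<epsilon>(1) by blast
    have "sufficient F B b A a"
      using a(1) \<epsilon>(2) unfolding sufficient_def by simp
    then obtain C c' where Cc: "fpt_in C c' E" "tolerable F B (weaken F C c' B b) A a"
      using a(2) Bb unfolding defends_against_def by blast
    have "weaken F C (E C) B b \<le> weaken F C c' B b"
      using Cc(1) by (intro weaken_antimono) (simp add: fpt_in_def)
    then have "t C + a \<le> 1"
      using tolerable_antimono[OF _ Cc(2)] unfolding tolerable_def t_def by blast
    moreover have "C \<in> K"
      using Cc(1) unfolding fpt_in_def K_def by simp
    ultimately show False
      using \<epsilon>(3) a(1) by fastforce
  qed
qed

lemma fpt_in_funion_defended_iff:
  assumes fin: "finite {C. E C > 0}" and E1: "\<And>y. E y \<le> 1" and R: "\<And>y. 0 \<le> R y"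
  shows "fpt_in x a (funion (\<lambda>A a. fpt_in A a R \<and> defends_against F Att E A a))
    \<longleftrightarrow> fpt_in x a R \<and> defends_against F Att E x a"
    (is "fpt_in x a (funion ?P) \<longleftrightarrow> _")
proof
  assume xa: "fpt_in x a (funion ?P)"
  have "funion ?P x \<le> R x"
    by (rule funion_least) (auto simp: fpt_in_def R)
  then have "fpt_in x a R"
    using xa unfolding fpt_in_def by simp
  moreover have "defends_against F Att E x a"
  proof (rule defends_against_Sup[OF fin E1])
    fix \<epsilon> :: real assume "\<epsilon> > 0"
    with xa show "\<exists>a'. a - \<epsilon> < a' \<and> defends_against F Att E x a'"
      unfolding fpt_in_def by (auto dest: funion_approx simp: fpt_in_def)
  qed
  ultimately show "fpt_in x a R \<and> defends_against F Att E x a" ..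
next
  assume "fpt_in x a R \<and> defends_against F Att E x a"
  then show "fpt_in x a (funion ?P)"
    unfolding fpt_in_def by (auto intro: funion_upper)
qed

lemma restrict_simps [simp]:
  "args (restrict F T) = Supp T"
  "fa (restrict F T) = T"
  "rho (restrict F T) x y = (if x \<in> Supp T \<and> y \<in> Supp T then rho F x y else 0)"
  unfolding restrict_def by auto

lemma sufficient_restrict:
  "sufficient (restrict F T) B b C c \<Longrightarrow> c \<le> 1 \<Longrightarrow>
   B \<in> Supp T \<and> C \<in> Supp T \<and> sufficient F B b C c"
  unfolding sufficient_def by (auto simp: min_def split: if_splits)

lemma restrict_attack_eqs:
  assumes "B \<in> Supp T" "C \<in> Supp T"
  shows "sufficient (restrict F T) B b C c = sufficient F B b C c"
    and "tolerable (restrict F T) B b C c = tolerable F B b C c"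
    and "weaken (restrict F T) B b C c = weaken F B b C c"
  using assms unfolding sufficient_def tolerable_def weaken_def by simp_all

lemma conflict_free_restrict:
  assumes cf: "conflict_free F T" and le: "\<And>x. T' x \<le> T x"
  shows "conflict_free (restrict F R) T'"
  unfolding conflict_free_def
proof (intro notI, elim exE conjE)
  fix A a B b
  assume A: "fpt_in A a T'" and B: "fpt_in B b T'" and suff: "sufficient (restrict F R) A a B b"
  have "fpt_in A a T" "fpt_in B b T"
    using fpt_in_mono[OF A le] fpt_in_mono[OF B le] .
  moreover have "sufficient F A a B b"
    using sufficient_restrict[OF suff] B unfolding fpt_in_def by blast
  ultimately show False
    using cf unfolding conflict_free_def by blast
qed

lemma AE_iff: "E \<in> AE F C \<longleftrightarrow> fsub E (fa F) \<and> conflict_free F E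
    \<and> (\<forall>A a. fpt_in A a E \<longrightarrow> wdefends F E A a) \<and> fsub E C"
  unfolding AE_def admissible_def by auto

lemma CE_iff: "E \<in> CE F C \<longleftrightarrow> E \<in> AE F C \<and> (\<forall>A a. fpt_in A a C \<and> wdefends F E A a \<longrightarrow> fpt_in A a E)"
  unfolding CE_def by simp

lemma PE_iff: "E \<in> PE F C \<longleftrightarrow> E \<in> AE F C \<and> (\<forall>E'\<in>AE F C. fsub E E' \<longrightarrow> E' = E)"
  unfolding PE_def by simp

lemma AE0_eq_AE_fa: "AE0 F = AE F (fa F)"
  unfolding AE0_def AE_def admissible_def by auto

lemma pequiv_refl: "pequiv F A A"
  unfolding pequiv_def by simp

lemma pequiv_sym: "pequiv F A B \<Longrightarrow> pequiv F B A"
  unfolding pequiv_def by auto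

lemma pequiv_trans: "pequiv F A B \<Longrightarrow> pequiv F B C \<Longrightarrow> pequiv F A C"
  unfolding pequiv_def by (auto intro: trancl_trans)

definition strictly_upstream :: "'a faf \<Rightarrow> ('a \<times> 'a) set" where
  "strictly_upstream F = {(y, x). y \<in> args F \<and> x \<in> args F
     \<and> (y, x) \<in> (attR F)\<^sup>+ \<and> (x, y) \<notin> (attR F)\<^sup>+}"

lemma trans_strictly_upstream: "trans (strictly_upstream F)"
  unfolding strictly_upstream_def by (rule transI) (auto intro: trancl_trans)

lemma wf_strictly_upstream:
  assumes "finite (args F)"
  shows "wf (strictly_upstream F)"
proof (rule finite_acyclic_wf)
  have "strictly_upstream F \<subseteq> args F \<times> args F"
    unfolding strictly_upstream_def by auto
  then show "finite (strictly_upstream F)"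
    using assms by (meson finite_SigmaI finite_subset)
  show "acyclic (strictly_upstream F)"
    unfolding acyclic_irrefl trancl_id[OF trans_strictly_upstream]
    by (auto simp: irrefl_def strictly_upstream_def)
qed

lemma Supp_SCC: "x \<in> Supp (SCC F A) \<longleftrightarrow> pequiv F x A \<and> fa F x > 0"
  unfolding Supp_def SCC_def by auto

lemma outparents_pos:
  "outparents F S B > 0 \<Longrightarrow>
   B \<in> args F \<and> B \<notin> Supp S \<and> (\<exists>A\<in>Supp S. rho F B A > 0) \<and> outparents F S B = fa F B"
  unfolding outparents_def by (auto split: if_splits)

locale wf_framework =
  fixes F :: "'a faf"
  assumes wf: "wf_faf F"
begin

lemma fa_nonneg: "0 \<le> fa F x"
  using wf unfolding wf_faf_def by simp

lemma fa_le1: "fa F x \<le> 1"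
  using wf unfolding wf_faf_def by simp

lemma fa_pos_args: "fa F x > 0 \<Longrightarrow> x \<in> args F"
  using wf unfolding wf_faf_def by (metis less_irrefl)

lemma rho_nonneg: "0 \<le> rho F x y"
  using wf unfolding wf_faf_def by simp

lemma rho_le1: "rho F x y \<le> 1"
  using wf unfolding wf_faf_def by simp

lemma rho_pos_args: "rho F x y > 0 \<Longrightarrow> x \<in> args F \<and> y \<in> args F"
  using wf unfolding wf_faf_def by (metis less_irrefl)

lemma finite_args: "finite (args F)"
  using wf unfolding wf_faf_def by simp

lemma fsub_fa_refl: "fsub (fa F) (fa F)"
  unfolding fsub_def using fa_nonneg by simp

lemma fsub_fa_le1: "fsub E (fa F) \<Longrightarrow> E x \<le> 1"
  using fsub_le[of E "fa F" x] fa_le1[of x] by linarith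

lemma finite_pos_fsub_fa:
  assumes "fsub E (fa F)"
  shows "finite {x. E x > 0}"
proof (rule finite_subset[OF _ finite_args])
  show "{x. E x > 0} \<subseteq> args F"
  proof
    fix x assume "x \<in> {x. E x > 0}"
    then have "fa F x > 0"
      using fsub_le[OF assms, of x] by simp
    then show "x \<in> args F"
      by (rule fa_pos_args)
  qed
qed

lemma fpt_in_fsub_fa_value: "fsub E (fa F) \<Longrightarrow> 0 < E x \<Longrightarrow> fpt_in x (E x) E"
  by (rule fpt_in_value) (simp_all add: fsub_fa_le1)

lemma fsub_fa_zero: "fsub E (fa F) \<Longrightarrow> \<not> fa F x > 0 \<Longrightarrow> E x = 0"
  using fsub_nonneg[of E "fa F" x] fsub_le[of E "fa F" x] by linarith

lemma SCC_in_SCCS: "fa F x > 0 \<Longrightarrow> SCC F x \<in> SCCS F \<and> x \<in> Supp (SCC F x)"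
  by (simp add: SCCS_def Supp_SCC fa_pos_args pequiv_refl)

lemma SCCS_nonneg: "S \<in> SCCS F \<Longrightarrow> 0 \<le> S x"
  unfolding SCCS_def SCC_def using fa_nonneg by auto

lemma SCCS_eq_fa: "S \<in> SCCS F \<Longrightarrow> x \<in> Supp S \<Longrightarrow> S x = fa F x"
  unfolding SCCS_def SCC_def Supp_def by (auto split: if_splits)

lemma SCCS_Supp_args:
  assumes "S \<in> SCCS F" "x \<in> Supp S"
  shows "x \<in> args F"
proof (rule fa_pos_args)
  show "fa F x > 0"
    using SCCS_eq_fa[OF assms] assms(2) unfolding Supp_iff by simp
qed

lemma finter_SCCS_in: "S \<in> SCCS F \<Longrightarrow> x \<in> Supp S \<Longrightarrow> fsub E (fa F) \<Longrightarrow> finter E S x = E x"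
  using SCCS_eq_fa[of S x] fsub_le[of E "fa F" x] by simp

lemma finter_SCCS_out:
  assumes "S \<in> SCCS F" "x \<notin> Supp S" "fsub E G"
  shows "finter E S x = 0"
proof -
  have "S x = 0"
    using SCCS_nonneg[OF assms(1), of x] assms(2) unfolding Supp_iff by linarith
  then show ?thesis
    using fsub_nonneg[OF assms(3), of x] by simp
qed

lemma fpt_in_finter_SCCS:
  "S \<in> SCCS F \<Longrightarrow> fsub E (fa F) \<Longrightarrow> fpt_in x a (finter E S) \<longleftrightarrow> x \<in> Supp S \<and> fpt_in x a E"
  by (cases "x \<in> Supp S") (auto simp: fpt_in_def finter_SCCS_in finter_SCCS_out)

lemma fsub_finter_SCCS: "S \<in> SCCS F \<Longrightarrow> fsub E G \<Longrightarrow> fsub (finter E S) E"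
  unfolding fsub_def using SCCS_nonneg by auto

lemma outparents_nonneg: "0 \<le> outparents F S B"
  unfolding outparents_def using fa_nonneg by auto

lemma fpt_in_outparents_iff:
  "fpt_in B b (outparents F S) \<longleftrightarrow> fpt_in B b (fa F) \<and> B \<notin> Supp S \<and> (\<exists>A\<in>Supp S. rho F B A > 0)"
  unfolding fpt_in_def outparents_def using rho_pos_args by auto

lemma Lf_nonneg: "0 \<le> Lf F S E A"
  unfolding Lf_def using finite_args by auto

lemma Lf_le1: "Lf F S E A \<le> 1"
  unfolding Lf_def using finite_args rho_le1 by (auto simp: min_le_iff_disj)

lemma min_le_Lf:
  assumes A: "A \<in> Supp S" and B: "B \<notin> Supp S" and E: "fsub E (fa F)"
  shows "min (E B) (rho F B A) \<le> Lf F S E A"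
proof (cases "rho F B A > 0")
  case True
  then have "outparents F S B = fa F B" "B \<in> args F"
    using A B rho_pos_args unfolding outparents_def by auto
  then have "min (E B) (rho F B A) = min (min (E B) (outparents F S B)) (rho F B A)"
    using fsub_le[OF E, of B] by simp
  also have "\<dots> \<le> Lf F S E A"
    unfolding Lf_def using A finite_args \<open>B \<in> args F\<close> by (auto intro: Max_ge)
  finally show ?thesis .
next
  case False
  then show ?thesis
    using rho_nonneg[of B A] Lf_nonneg[of S E A] by (simp add: min_le_iff_disj)
qed

lemma Lf_attained:
  assumes A: "A \<in> Supp S" and pos: "Lf F S E A > 0" and E: "fsub E (fa F)"
  obtains B where "B \<notin> Supp S" "E B > 0" "Lf F S E A = min (E B) (rho F B A)"
proof -
  let ?M = "insert 0 ((\<lambda>B. min (min (E B) (outparents F S B)) (rho F B A)) ` args F)"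
  have "Lf F S E A = Max ?M"
    unfolding Lf_def using A by simp
  moreover have "Max ?M \<in> ?M"
    using finite_args by (intro Max_in) auto
  ultimately obtain B where B: "Lf F S E A = min (min (E B) (outparents F S B)) (rho F B A)"
    using pos by auto
  then have "E B > 0" and op: "outparents F S B > 0"
    using pos by auto
  moreover have "B \<notin> Supp S" "outparents F S B = fa F B"
    using outparents_pos[OF op] by auto
  ultimately show ?thesis
    using that B fsub_le[OF E, of B] by (simp add: min_absorb1)
qed

lemma Rf_in: "A \<in> Supp S \<Longrightarrow> Rf F S E A = min (fa F A) (1 - Lf F S E A)"
  unfolding Rf_def by simp

lemma Rf_nonneg: "0 \<le> Rf F S E A"
  unfolding Rf_def using fa_nonneg Lf_le1 by auto

lemma Rf_le_fa: "Rf F S E A \<le> fa F A"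
  unfolding Rf_def using fa_nonneg by auto

lemma Rf_le1: "Rf F S E A \<le> 1"
  using Rf_le_fa[of S E A] fa_le1[of A] by linarith

lemma Rf_le_1_minus_Lf: "A \<in> Supp S \<Longrightarrow> Rf F S E A \<le> 1 - Lf F S E A"
  unfolding Rf_def by simp

lemma Supp_Rf_subset: "Supp (Rf F S E) \<subseteq> Supp S"
  unfolding Supp_def Rf_def by (auto split: if_splits)

lemma fsub_Rf: "fsub (Rf F S E) (fa F)"
  unfolding fsub_def using Rf_nonneg Rf_le_fa by auto

lemma wf_framework_local: "wf_framework (local_faf F S E)"
proof
  have "Supp (Rf F S E) \<subseteq> args F"
  proof
    fix x assume "x \<in> Supp (Rf F S E)"
    then have "fa F x > 0"
      using Rf_le_fa[of S E x] unfolding Supp_iff by linarith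
    then show "x \<in> args F"
      by (rule fa_pos_args)
  qed
  then have "finite (Supp (Rf F S E))"
    using finite_subset finite_args by blast
  moreover have "Rf F S E x = 0" if "x \<notin> Supp (Rf F S E)" for x
    using that Rf_nonneg[of S E x] unfolding Supp_iff by linarith
  ultimately show "wf_faf (local_faf F S E)"
    unfolding wf_faf_def using Rf_nonneg Rf_le1 rho_nonneg rho_le1 by simp
qed

text \<open>An outside argument of \<open>E\<close> contributes at most \<open>L(S,E)\<close> to an attack on \<open>S\<close>, and
  \<open>R(S,E)\<close> leaves exactly room for that.\<close>

lemma outside_attack_tolerable:
  assumes E: "fsub E (fa F)" and B: "B \<in> Supp S" "b \<le> Rf F S E B"
    and A: "A \<notin> Supp S" "a \<le> E A"
  shows "\<not> sufficient F A a B b"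
proof -
  have "min a (rho F A B) \<le> min (E A) (rho F A B)"
    using A(2) by (rule min.mono) simp
  then have "min a (rho F A B) \<le> Lf F S E B"
    using min_le_Lf[OF B(1) A(1) E] by linarith
  moreover have "b \<le> 1 - Lf F S E B"
    using B(2) Rf_le_1_minus_Lf[OF B(1), of E] by linarith
  ultimately show ?thesis
    unfolding sufficient_def by linarith
qed

lemma Rf_cut_by_outside_attacker:
  assumes E: "fsub E (fa F)" and B: "B \<in> Supp S" and b: "Rf F S E B < b" "b \<le> fa F B"
  obtains B' where "fpt_in B' (E B') E" "weaken F B' (E B') B b = Rf F S E B"
proof -
  have R: "Rf F S E B = 1 - Lf F S E B"
    using b unfolding Rf_in[OF B] by (auto simp: min_def split: if_splits)
  then have "Lf F S E B > 0"
    using b fa_le1[of B] by linarith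
  then obtain B' where B': "E B' > 0" "Lf F S E B = min (E B') (rho F B' B)"
    using Lf_attained[OF B _ E] by blast
  then have "weaken F B' (E B') B b = Rf F S E B"
    using R b(1) unfolding weaken_def by simp
  with B'(1) show ?thesis
    using that fpt_in_fsub_fa_value[OF E] by blast
qed

lemma conflict_free_le_Rf:
  assumes E: "fsub E (fa F)" and cf: "conflict_free F E" and A: "A \<in> Supp S"
  shows "E A \<le> Rf F S E A"
proof (rule ccontr)
  assume "\<not> E A \<le> Rf F S E A"
  then have less: "Rf F S E A < E A"
    by simp
  then obtain B where B: "fpt_in B (E B) E" "weaken F B (E B) A (E A) = Rf F S E A"
    using Rf_cut_by_outside_attacker[OF E A _ fsub_le[OF E]] by blast
  then have "sufficient F B (E B) A (E A)"
    using less unfolding weaken_less_iff_sufficient[symmetric] by simp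
  moreover have "fpt_in A (E A) E"
    using less Rf_nonneg[of S E A] by (intro fpt_in_fsub_fa_value[OF E]) linarith
  ultimately show False
    using cf B(1) unfolding conflict_free_def by blast
qed

lemma fsub_finter_SCCS_Rf:
  assumes S: "S \<in> SCCS F" and E: "fsub E (fa F)" and cf: "conflict_free F E"
  shows "fsub (finter E S) (Rf F S E)"
  unfolding fsub_def
proof
  fix x
  show "0 \<le> finter E S x \<and> finter E S x \<le> Rf F S E x"
    by (cases "x \<in> Supp S")
      (simp_all add: finter_SCCS_in[OF S _ E] finter_SCCS_out[OF S _ E] conflict_free_le_Rf[OF E cf]
        fsub_nonneg[OF E] Rf_nonneg)
qed

lemma Df_le_Rf: "Df F S E x \<le> Rf F S E x"
  unfolding Df_eq_funion by (rule funion_least) (auto simp: fpt_in_def Rf_nonneg)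

lemma Df_nonneg: "0 \<le> Df F S E x"
  unfolding Df_eq_funion by (rule funion_nonneg) (auto simp: fpt_in_def)

lemma fpt_in_Df_iff:
  "fsub E (fa F) \<Longrightarrow>
    fpt_in x a (Df F S E) \<longleftrightarrow> fpt_in x a (Rf F S E) \<and> defends_against F (outparents F S) E x a"
  unfolding Df_eq_funion using finite_pos_fsub_fa fsub_fa_le1 Rf_nonneg
  by (rule fpt_in_funion_defended_iff)

subsection \<open>Transferring defence between a framework and its SCCs\<close>

lemma wdefends_le_Rf:
  assumes E: "fsub E (fa F)" and cf: "conflict_free F E" and X: "fsub X E"
    and x: "x \<in> Supp S" and xa: "fpt_in x a (fa F)" and wd: "wdefends F X x a"
  shows "a \<le> Rf F S E x"
proof (rule ccontr)
  assume "\<not> a \<le> Rf F S E x"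
  then have less: "Rf F S E x < a"
    by simp
  then obtain B where B: "fpt_in B (E B) E" "weaken F B (E B) x a = Rf F S E x"
    using Rf_cut_by_outside_attacker[OF E x _ fpt_in_le[OF xa]] by blast
  then have suff: "sufficient F B (E B) x a"
    using less unfolding weaken_less_iff_sufficient[symmetric] by simp
  obtain A' a' where A': "fpt_in A' a' X" "tolerable F B (weaken F A' a' B (E B)) x a"
    using wd suff fpt_in_fsub[OF B(1) E] unfolding wdefends_def by blast
  have "sufficient F A' a' B (E B)"
    using suff A'(2) by (rule sufficient_of_weaken_tolerable)
  moreover have "fpt_in A' a' E"
    using A'(1) X by (rule fpt_in_fsub)
  ultimately show False
    using cf B(1) unfolding conflict_free_def by blast
qed

lemma wdefends_imp_fpt_in_Df:
  assumes E: "fsub E (fa F)" and cf: "conflict_free F E" and X: "fsub X E"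
    and x: "x \<in> Supp S" and xa: "fpt_in x a (fa F)" and wd: "wdefends F X x a"
  shows "fpt_in x a (Df F S E)"
  unfolding fpt_in_Df_iff[OF E]
proof
  show "fpt_in x a (Rf F S E)"
    using xa wdefends_le_Rf[OF assms] unfolding fpt_in_def by simp
  have "defends_against F (fa F) E x a"
    using wd fsub_le[OF X] unfolding wdefends_eq_defends_against by (rule defends_against_mono)
  then show "defends_against F (outparents F S) E x a"
    by (rule defends_against_antimono_attackers) (simp add: fpt_in_outparents_iff)
qed

lemma wdefends_localize:
  assumes S: "S \<in> SCCS F" and E: "fsub E (fa F)" and cf: "conflict_free F E" and X: "fsub X E"
    and xa: "fpt_in x a (fa F)" and wd: "wdefends F X x a"
  shows "wdefends (local_faf F S E) (finter X S) x a"
  unfolding wdefends_def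
proof (intro allI impI)
  fix B b
  assume "fpt_in B b (fa (local_faf F S E)) \<and> sufficient (local_faf F S E) B b x a"
  then have BR: "fpt_in B b (Rf F S E)" and suff_loc: "sufficient (local_faf F S E) B b x a"
    by simp_all
  have B: "B \<in> Supp (Rf F S E)" "x \<in> Supp (Rf F S E)" and suff: "sufficient F B b x a"
    using sufficient_restrict[OF suff_loc] xa unfolding fpt_in_def by blast+
  have BS: "B \<in> Supp S"
    using B(1) Supp_Rf_subset by blast
  obtain A' a' where A': "fpt_in A' a' X" "tolerable F B (weaken F A' a' B b) x a"
    using wd fpt_in_fsub[OF BR fsub_Rf] suff unfolding wdefends_def by blast
  have A'E: "fpt_in A' a' E"
    using A'(1) X by (rule fpt_in_fsub)
  have "sufficient F A' a' B b"
    using suff A'(2) by (rule sufficient_of_weaken_tolerable)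
  then have AS: "A' \<in> Supp S"
    using outside_attack_tolerable[OF E BS fpt_in_le[OF BR] _ fpt_in_le[OF A'E]] by blast
  then have "a' \<le> Rf F S E A'"
    using fpt_in_le[OF A'E] conflict_free_le_Rf[OF E cf] by (meson order_trans)
  then have "A' \<in> Supp (Rf F S E)"
    using A'(1) unfolding fpt_in_def Supp_iff by linarith
  then have "tolerable (local_faf F S E) B (weaken (local_faf F S E) A' a' B b) x a"
    using A'(2) restrict_attack_eqs[OF _ B(1)] restrict_attack_eqs[OF B] by simp
  moreover have "fpt_in A' a' (finter X S)"
    using fpt_in_finter_SCCS[OF S fsub_trans[OF X E]] AS A'(1) by simp
  ultimately show "\<exists>A' a'. fpt_in A' a' (finter X S)
      \<and> tolerable (local_faf F S E) B (weaken (local_faf F S E) A' a' B b) x a"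
    by blast
qed

lemma wdefends_local_unfold:
  assumes Y: "fsub Y (Rf F S E)" and x: "x \<in> Supp (Rf F S E)"
    and wd: "wdefends (local_faf F S E) Y x a"
    and B: "fpt_in B b (Rf F S E)" and suff: "sufficient F B b x a"
  obtains A' a' where "fpt_in A' a' Y" "tolerable F B (weaken F A' a' B b) x a"
proof -
  have BR: "B \<in> Supp (Rf F S E)"
    using B by (rule fpt_in_Supp)
  then have "sufficient (local_faf F S E) B b x a"
    using suff restrict_attack_eqs(1)[OF BR x] by simp
  then obtain A' a' where A': "fpt_in A' a' Y"
      "tolerable (local_faf F S E) B (weaken (local_faf F S E) A' a' B b) x a"
    using wd B unfolding wdefends_def restrict_simps by blast
  have "A' \<in> Supp (Rf F S E)"
    using fpt_in_fsub[OF A'(1) Y] by (rule fpt_in_Supp)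
  then have "tolerable F B (weaken F A' a' B b) x a"
    using A'(2) restrict_attack_eqs[OF _ BR] restrict_attack_eqs[OF BR x] by simp
  with A'(1) show ?thesis
    using that by blast
qed

text \<open>An attacker inside \<open>S\<close> that is stronger than \<open>R(S,E)\<close> allows is first cut down to
  \<open>R(S,E)\<close> by the outside argument of \<open>E\<close> realising \<open>L(S,E)\<close>; if that does not suffice, the
  local defender against the cut-down attacker also tames the original one.\<close>

lemma inside_attacker_tamed:
  assumes E: "fsub E (fa F)" and Y: "fsub Y (Rf F S E)" and xR: "fpt_in x a (Rf F S E)"
    and wd: "wdefends (local_faf F S E) Y x a"
    and BS: "B \<in> Supp S" and B: "fpt_in B b (fa F)" and suff: "sufficient F B b x a"
  shows "\<exists>A' a'. (fpt_in A' a' E \<or> fpt_in A' a' Y) \<and> tolerable F B (weaken F A' a' B b) x a"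
proof (cases "b \<le> Rf F S E B")
  case True
  then have "fpt_in B b (Rf F S E)"
    using B unfolding fpt_in_def by simp
  then obtain A' a' where "fpt_in A' a' Y" "tolerable F B (weaken F A' a' B b) x a"
    using wdefends_local_unfold[OF Y fpt_in_Supp[OF xR] wd _ suff] by blast
  then show ?thesis
    by blast
next
  case strong: False
  then obtain B' where B': "fpt_in B' (E B') E" "weaken F B' (E B') B b = Rf F S E B"
    using Rf_cut_by_outside_attacker[OF E BS _ fpt_in_le[OF B]] by auto
  show ?thesis
  proof (cases "tolerable F B (Rf F S E B) x a")
    case True
    then show ?thesis
      using B' by (intro exI[of _ B'] exI[of _ "E B'"]) simp
  next
    case False
    then have sR: "sufficient F B (Rf F S E B) x a"
      by (simp add: not_tolerable_iff_sufficient)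
    have "a \<le> 1"
      using xR unfolding fpt_in_def by simp
    then have "fpt_in B (Rf F S E B) (Rf F S E)"
      using sufficient_rho_pos[OF sR] Rf_le1[of S E B] unfolding fpt_in_def by simp
    then obtain A' a' where A': "fpt_in A' a' Y" "tolerable F B (weaken F A' a' B (Rf F S E B)) x a"
      using wdefends_local_unfold[OF Y fpt_in_Supp[OF xR] wd _ sR] by blast
    have "weaken F A' a' B (Rf F S E B) \<noteq> Rf F S E B"
      using A'(2) False by auto
    then have "1 - min a' (rho F A' B) < Rf F S E B"
      unfolding weaken_def by linarith
    then have "weaken F A' a' B b = weaken F A' a' B (Rf F S E B)"
      using strong unfolding weaken_def by simp
    then show ?thesis
      using A' by (intro exI[of _ A'] exI[of _ a']) simp
  qed
qed

lemma wdefends_globalize: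
  assumes E: "fsub E (fa F)" and Y: "fsub Y (Rf F S E)"
    and EX: "\<And>y. E y \<le> X y" and YX: "\<And>y. Y y \<le> X y"
    and xD: "fpt_in x a (Df F S E)" and wd: "wdefends (local_faf F S E) Y x a"
  shows "wdefends F X x a"
  unfolding wdefends_def
proof (intro allI impI)
  fix B b assume Bb: "fpt_in B b (fa F) \<and> sufficient F B b x a"
  have xR: "fpt_in x a (Rf F S E)" and gd: "defends_against F (outparents F S) E x a"
    using xD unfolding fpt_in_Df_iff[OF E] by auto
  have tamed: "\<exists>A' a'. (fpt_in A' a' E \<or> fpt_in A' a' Y) \<and> tolerable F B (weaken F A' a' B b) x a"
  proof (cases "B \<in> Supp S")
    case False
    have "x \<in> Supp S"
      using fpt_in_Supp[OF xR] Supp_Rf_subset by blast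
    moreover have "rho F B x > 0"
      using Bb sufficient_rho_pos[of F B b x a] xR unfolding fpt_in_def by blast
    ultimately have "fpt_in B b (outparents F S)"
      using Bb False unfolding fpt_in_outparents_iff by blast
    then show ?thesis
      using gd Bb unfolding defends_against_def by blast
  qed (use inside_attacker_tamed[OF E Y xR wd] Bb in blast)
  then show "\<exists>A' a'. fpt_in A' a' X \<and> tolerable F B (weaken F A' a' B b) x a"
    using fpt_in_mono[of _ _ E X, OF _ EX] fpt_in_mono[of _ _ Y X, OF _ YX] by blast
qed

subsection \<open>Admissible and complete extensions\<close>

lemma fpt_in_own_SCC_part:
  assumes E: "fsub E (fa F)" and xa: "fpt_in x a E"
  shows "SCC F x \<in> SCCS F" "x \<in> Supp (SCC F x)" "fpt_in x a (finter E (SCC F x))"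
proof -
  have "fa F x > 0"
    using fpt_in_Supp[OF fpt_in_fsub[OF xa E]] unfolding Supp_iff .
  then show S: "SCC F x \<in> SCCS F" "x \<in> Supp (SCC F x)"
    using SCC_in_SCCS by auto
  then show "fpt_in x a (finter E (SCC F x))"
    using fpt_in_finter_SCCS[OF S(1) E] xa by simp
qed

lemma AE_local_iff:
  "T \<in> AE (local_faf F S E) C' \<longleftrightarrow> fsub T (Rf F S E) \<and> conflict_free (local_faf F S E) T
    \<and> (\<forall>A a. fpt_in A a T \<longrightarrow> wdefends (local_faf F S E) T A a) \<and> fsub T C'"
  unfolding AE_iff by simp

lemma AE_restrict_SCC:
  assumes EA: "E \<in> AE F C" and S: "S \<in> SCCS F"
  shows "finter E S \<in> AE (local_faf F S E) (finter (Df F S E) C)"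
proof -
  have E: "fsub E (fa F)" and cf: "conflict_free F E" and EC: "fsub E C"
    and df: "\<And>A a. fpt_in A a E \<Longrightarrow> wdefends F E A a"
    using EA unfolding AE_iff by auto
  have part: "A \<in> Supp S" "fpt_in A a E" if "fpt_in A a (finter E S)" for A a
    using that fpt_in_finter_SCCS[OF S E] by auto
  have "fsub (finter E S) (Df F S E)"
  proof (rule fsub_by_fpt_in)
    fix A a assume "fpt_in A a (finter E S)"
    then show "fpt_in A a (Df F S E)"
      using part wdefends_imp_fpt_in_Df[OF E cf fsub_self[OF E]] fpt_in_fsub[OF _ E] df by blast
  qed (use fsub_nonneg[OF E] SCCS_nonneg[OF S] fsub_fa_le1[OF E] Df_nonneg in \<open>auto simp: min_le_iff_disj\<close>)
  then have "fsub (finter E S) (finter (Df F S E) C)"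
    using fsub_finter fsub_trans[OF fsub_finter_SCCS[OF S E] EC] by blast
  moreover have "wdefends (local_faf F S E) (finter E S) A a" if "fpt_in A a (finter E S)" for A a
    using part[OF that] wdefends_localize[OF S E cf fsub_self[OF E]] fpt_in_fsub[OF _ E] df by blast
  ultimately show ?thesis
    unfolding AE_local_iff
    using fsub_finter_SCCS_Rf[OF S E cf] conflict_free_restrict[OF cf] by simp
qed

lemma conflict_free_of_SCC_parts:
  assumes E: "fsub E (fa F)"
    and parts: "\<And>S. S \<in> SCCS F \<Longrightarrow>
      fsub (finter E S) (Rf F S E) \<and> conflict_free (local_faf F S E) (finter E S)"
  shows "conflict_free F E"
  unfolding conflict_free_def
proof (intro notI, elim exE conjE)
  fix A a B b assume A: "fpt_in A a E" and B: "fpt_in B b E" and suff: "sufficient F A a B b"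
  let ?S = "SCC F B"
  have S: "?S \<in> SCCS F" "B \<in> Supp ?S" and BT: "fpt_in B b (finter E ?S)"
    using fpt_in_own_SCC_part[OF E B] by auto
  have TR: "fsub (finter E ?S) (Rf F ?S E)" and Tcf: "conflict_free (local_faf F ?S E) (finter E ?S)"
    using parts[OF S(1)] by auto
  have BR: "fpt_in B b (Rf F ?S E)"
    using BT TR by (rule fpt_in_fsub)
  show False
  proof (cases "A \<in> Supp ?S")
    case True
    then have AT: "fpt_in A a (finter E ?S)"
      using fpt_in_finter_SCCS[OF S(1) E] A by simp
    then have "sufficient (local_faf F ?S E) A a B b"
      using restrict_attack_eqs(1)[OF fpt_in_Supp[OF fpt_in_fsub[OF AT TR]] fpt_in_Supp[OF BR]] suff
      by simp
    then show False
      using Tcf AT BT unfolding conflict_free_def by blast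
  next
    case False
    then show False
      using outside_attack_tolerable[OF E S(2) fpt_in_le[OF BR] _ fpt_in_le[OF A]] suff by blast
  qed
qed

lemma AE_of_SCC_parts:
  assumes C: "fsub C (fa F)" and E: "fsub E (fa F)"
    and parts: "\<And>S. S \<in> SCCS F \<Longrightarrow> finter E S \<in> AE (local_faf F S E) (finter (Df F S E) C)"
  shows "E \<in> AE F C"
proof -
  have TR: "fsub (finter E S) (Rf F S E)" and Tcf: "conflict_free (local_faf F S E) (finter E S)"
    and Tdf: "\<And>A a. fpt_in A a (finter E S) \<Longrightarrow> wdefends (local_faf F S E) (finter E S) A a"
    and TC: "fsub (finter E S) (finter (Df F S E) C)" if "S \<in> SCCS F" for S
    using parts[OF that] unfolding AE_local_iff by blast+
  have in_part: "fpt_in x a (Df F (SCC F x) E) \<and> fpt_in x a C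
      \<and> wdefends (local_faf F (SCC F x) E) (finter E (SCC F x)) x a" if xa: "fpt_in x a E" for x a
  proof -
    have S: "SCC F x \<in> SCCS F" and xT: "fpt_in x a (finter E (SCC F x))"
      using fpt_in_own_SCC_part[OF E xa] by auto
    then show ?thesis
      using fpt_in_fsub[OF xT TC[OF S]] Tdf[OF S xT] unfolding fpt_in_finter by blast
  qed
  have "fsub E C"
  proof (rule fsub_by_fpt_in)
    show "fpt_in x a C" if "fpt_in x a E" for x a
      using in_part[OF that] by blast
  qed (use fsub_nonneg[OF E] fsub_fa_le1[OF E] fsub_nonneg[OF C] in auto)
  moreover have "conflict_free F E"
    by (rule conflict_free_of_SCC_parts[OF E]) (use TR Tcf in blast)
  moreover have "wdefends F E x a" if xa: "fpt_in x a E" for x a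
  proof -
    have S: "SCC F x \<in> SCCS F"
      using fpt_in_own_SCC_part[OF E xa] by blast
    show ?thesis
      using wdefends_globalize[OF E TR[OF S], of E] in_part[OF xa] by simp
  qed
  ultimately show ?thesis
    unfolding AE_iff using E by blast
qed

lemma AE_SCC_decomposition:
  "fsub C (fa F) \<Longrightarrow> AE F C =
    {E. fsub E (fa F) \<and> (\<forall>S\<in>SCCS F. finter E S \<in> AE (local_faf F S E) (finter (Df F S E) C))}"
  using AE_restrict_SCC AE_of_SCC_parts AE_iff by blast

lemma CE_restrict_SCC:
  assumes EC: "E \<in> CE F C" and S: "S \<in> SCCS F"
  shows "finter E S \<in> CE (local_faf F S E) (finter (Df F S E) C)"
proof -
  have EA: "E \<in> AE F C" and complete: "\<And>A a. fpt_in A a C \<Longrightarrow> wdefends F E A a \<Longrightarrow> fpt_in A a E"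
    using EC unfolding CE_iff by auto
  have E: "fsub E (fa F)" and cf: "conflict_free F E"
    using EA unfolding AE_iff by auto
  have "fpt_in A a (finter E S)"
    if A: "fpt_in A a (finter (Df F S E) C)" and wd: "wdefends (local_faf F S E) (finter E S) A a" for A a
  proof -
    have AD: "fpt_in A a (Df F S E)" and AC: "fpt_in A a C"
      using A unfolding fpt_in_finter by auto
    have "wdefends F E A a"
      using wdefends_globalize[OF E fsub_finter_SCCS_Rf[OF S E cf] _ _ AD wd] by simp
    then have "fpt_in A a E"
      using complete AC by blast
    moreover have "A \<in> Supp S"
      using fpt_in_Supp[OF fpt_in_mono[OF AD Df_le_Rf]] Supp_Rf_subset by blast
    ultimately show ?thesis
      using fpt_in_finter_SCCS[OF S E] by simp
  qed
  then show ?thesis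
    unfolding CE_iff using AE_restrict_SCC[OF EA S] by blast
qed

lemma CE_of_SCC_parts:
  assumes C: "fsub C (fa F)" and E: "fsub E (fa F)"
    and parts: "\<And>S. S \<in> SCCS F \<Longrightarrow> finter E S \<in> CE (local_faf F S E) (finter (Df F S E) C)"
  shows "E \<in> CE F C"
proof -
  have EA: "E \<in> AE F C"
    using AE_of_SCC_parts[OF C E] parts unfolding CE_iff by blast
  then have cf: "conflict_free F E"
    unfolding AE_iff by blast
  have "fpt_in A a E" if AC: "fpt_in A a C" and wd: "wdefends F E A a" for A a
  proof -
    let ?S = "SCC F A"
    have S: "?S \<in> SCCS F" "A \<in> Supp ?S"
      using fpt_in_own_SCC_part[OF C AC] by auto
    have A: "fpt_in A a (fa F)"
      using AC C by (rule fpt_in_fsub)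
    have "fpt_in A a (finter (Df F ?S E) C)"
      using wdefends_imp_fpt_in_Df[OF E cf fsub_self[OF E] S(2) A wd] AC by (simp add: fpt_in_finter)
    moreover have "wdefends (local_faf F ?S E) (finter E ?S) A a"
      using wdefends_localize[OF S(1) E cf fsub_self[OF E] A wd] .
    ultimately have "fpt_in A a (finter E ?S)"
      using parts[OF S(1)] unfolding CE_iff by blast
    then show ?thesis
      using fpt_in_finter_SCCS[OF S(1) E] by simp
  qed
  then show ?thesis
    unfolding CE_iff using EA by blast
qed

lemma CE_SCC_decomposition:
  "fsub C (fa F) \<Longrightarrow> CE F C =
    {E. fsub E (fa F) \<and> (\<forall>S\<in>SCCS F. finter E S \<in> CE (local_faf F S E) (finter (Df F S E) C))}"
  using CE_restrict_SCC CE_of_SCC_parts CE_iff AE_iff by blast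

subsection \<open>Dependence on upstream components\<close>

lemma outparent_strictly_upstream:
  assumes x: "fa F x > 0" and B: "outparents F (SCC F x) B > 0"
  shows "(B, x) \<in> strictly_upstream F" "(x, B) \<notin> (attR F)\<^sup>+"
proof -
  have B': "B \<in> args F" "B \<notin> Supp (SCC F x)" "fa F B > 0"
    and "\<exists>A\<in>Supp (SCC F x). rho F B A > 0"
    using outparents_pos[OF B] B by auto
  then obtain A where A: "pequiv F A x" "rho F B A > 0"
    by (auto simp: Supp_SCC)
  have BA: "(B, A) \<in> attR F"
    using A(2) rho_pos_args unfolding attR_def by blast
  have Bx: "(B, x) \<in> (attR F)\<^sup>+"
    using A(1) BA unfolding pequiv_def by (auto intro: trancl_into_trancl2)
  show xB: "(x, B) \<notin> (attR F)\<^sup>+"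
  proof
    assume "(x, B) \<in> (attR F)\<^sup>+"
    then have "pequiv F B x"
      using Bx unfolding pequiv_def by blast
    then show False
      using B' unfolding Supp_SCC by blast
  qed
  show "(B, x) \<in> strictly_upstream F"
    using B'(1) fa_pos_args[OF x] Bx xB unfolding strictly_upstream_def by blast
qed

lemma attacker_of_outparent_strictly_upstream:
  assumes x: "fa F x > 0" and B: "outparents F (SCC F x) B > 0" and A: "rho F A B > 0"
  shows "(A, x) \<in> strictly_upstream F"
proof -
  have AB: "(A, B) \<in> attR F"
    using A rho_pos_args unfolding attR_def by blast
  have "(B, x) \<in> (attR F)\<^sup>+" "(x, B) \<notin> (attR F)\<^sup>+"
    using outparent_strictly_upstream[OF x B] unfolding strictly_upstream_def by auto
  then have "(A, x) \<in> (attR F)\<^sup>+" "(x, A) \<notin> (attR F)\<^sup>+"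
    using AB by (auto intro: trancl_into_trancl2 trancl_into_trancl)
  then show ?thesis
    using AB fa_pos_args[OF x] unfolding strictly_upstream_def attR_def by blast
qed

lemma defends_against_outparents_upstream:
  assumes x: "fa F x > 0" and eq: "\<And>y. (y, x) \<in> strictly_upstream F \<Longrightarrow> E y = E' y"
    and E: "defends_against F (outparents F (SCC F x)) E A a"
  shows "defends_against F (outparents F (SCC F x)) E' A a"
  unfolding defends_against_def
proof (intro allI impI)
  fix B b assume Bb: "fpt_in B b (outparents F (SCC F x)) \<and> sufficient F B b A a"
  then obtain C c where Cc: "fpt_in C c E" "tolerable F B (weaken F C c B b) A a"
    using E unfolding defends_against_def by blast
  have "sufficient F C c B b"
    using sufficient_of_weaken_tolerable[OF conjunct2[OF Bb] Cc(2)] .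
  then have "rho F C B > 0"
    using sufficient_rho_pos[of F C c B b] Bb unfolding fpt_in_def by blast
  moreover have "outparents F (SCC F x) B > 0"
    using Bb unfolding fpt_in_def by linarith
  ultimately have "E C = E' C"
    using eq attacker_of_outparent_strictly_upstream[OF x] by blast
  then show "\<exists>C c. fpt_in C c E' \<and> tolerable F B (weaken F C c B b) A a"
    using Cc unfolding fpt_in_def by auto
qed

lemma Lf_outparents_upstream:
  assumes x: "fa F x > 0" and E: "fsub E (fa F)" and E': "fsub E' (fa F)"
    and eq: "\<And>y. (y, x) \<in> strictly_upstream F \<Longrightarrow> E y = E' y"
  shows "Lf F (SCC F x) E = Lf F (SCC F x) E'"
proof -
  have upstream_part: "min (E B) (outparents F (SCC F x) B) = min (E' B) (outparents F (SCC F x) B)"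
    for B
  proof (cases "outparents F (SCC F x) B > 0")
    case True
    then show ?thesis
      using eq outparent_strictly_upstream(1)[OF x] by simp
  next
    case False
    then have "outparents F (SCC F x) B = 0"
      using outparents_nonneg[of "SCC F x" B] by linarith
    then show ?thesis
      using fsub_nonneg[OF E, of B] fsub_nonneg[OF E', of B] by simp
  qed
  show ?thesis
    unfolding Lf_def upstream_part by (rule refl)
qed

lemma Rf_Df_upstream:
  assumes x: "fa F x > 0" and E: "fsub E (fa F)" and E': "fsub E' (fa F)"
    and eq: "\<And>y. (y, x) \<in> strictly_upstream F \<Longrightarrow> E y = E' y"
  shows "Rf F (SCC F x) E = Rf F (SCC F x) E'" "Df F (SCC F x) E = Df F (SCC F x) E'"
proof -
  show R: "Rf F (SCC F x) E = Rf F (SCC F x) E'"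
    unfolding Rf_def using Lf_outparents_upstream[OF assms] by metis
  have "defends_against F (outparents F (SCC F x)) E A a
      \<longleftrightarrow> defends_against F (outparents F (SCC F x)) E' A a" for A a
    using defends_against_outparents_upstream[OF x] eq by (metis (no_types))
  then show "Df F (SCC F x) E = Df F (SCC F x) E'"
    unfolding Df_eq_funion R by simp
qed

text \<open>Well-founded induction along the upstream order: once \<open>E\<close> and \<open>E'\<close> agree upstream of
  \<open>S\<close>, they induce the same \<open>R\<close> and \<open>D\<close> on \<open>S\<close>.\<close>

lemma eq_if_SCC_parts_eq:
  assumes E: "fsub E (fa F)" and E': "fsub E' (fa F)"
    and parts: "\<And>S. S \<in> SCCS F \<Longrightarrow> Rf F S E = Rf F S E' \<Longrightarrow> Df F S E = Df F S E'
      \<Longrightarrow> finter E S = finter E' S"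
  shows "E = E'"
proof
  fix x
  show "E x = E' x"
  proof (induction x rule: wf_induct_rule[OF wf_strictly_upstream[OF finite_args]])
    case (1 x)
    show ?case
    proof (cases "fa F x > 0")
      case True
      then have S: "SCC F x \<in> SCCS F" "x \<in> Supp (SCC F x)"
        using SCC_in_SCCS by auto
      have "finter E (SCC F x) = finter E' (SCC F x)"
        using parts[OF S(1)] Rf_Df_upstream[OF True E E' "1.IH"] by blast
      then show ?thesis
        using finter_SCCS_in[OF S E] finter_SCCS_in[OF S E'] by metis
    next
      case False
      then show ?thesis
        using fsub_fa_zero[OF E] fsub_fa_zero[OF E'] by simp
    qed
  qed
qed

subsection \<open>Preferred extensions\<close>

lemma join_local_no_attack_on_local:
  assumes E: "fsub E (fa F)" and S: "S \<in> SCCS F" and TR: "fsub T (Rf F S E)"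
    and Tcf: "conflict_free (local_faf F S E) T" and ET: "fsub (finter E S) T"
    and p: "fpt_in p \<alpha> (\<lambda>x. max (E x) (T x))" and q: "fpt_in q \<beta> T"
  shows "\<not> sufficient F p \<alpha> q \<beta>"
proof
  assume suff: "sufficient F p \<alpha> q \<beta>"
  have qR: "fpt_in q \<beta> (Rf F S E)"
    using q TR by (rule fpt_in_fsub)
  have qS: "q \<in> Supp S"
    using fpt_in_Supp[OF qR] Supp_Rf_subset by blast
  have pT: "fpt_in p \<alpha> T"
  proof (cases "fpt_in p \<alpha> T")
    case False
    then have pE: "fpt_in p \<alpha> E"
      using fpt_in_max[OF p] by blast
    then have "p \<in> Supp S"
      using outside_attack_tolerable[OF E qS fpt_in_le[OF qR] _ fpt_in_le[OF pE]] suff by blast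
    then have "fpt_in p \<alpha> (finter E S)"
      using fpt_in_finter_SCCS[OF S E] pE by simp
    then show ?thesis
      using ET by (rule fpt_in_fsub)
  qed
  have "sufficient (local_faf F S E) p \<alpha> q \<beta>"
    using restrict_attack_eqs(1)[OF fpt_in_Supp[OF fpt_in_fsub[OF pT TR]] fpt_in_Supp[OF qR]] suff
    by simp
  then show False
    using Tcf pT q unfolding conflict_free_def by blast
qed

lemma conflict_free_join_local:
  assumes E: "fsub E (fa F)" and cf: "conflict_free F E"
    and df: "\<And>A a. fpt_in A a E \<Longrightarrow> wdefends F E A a"
    and S: "S \<in> SCCS F" and TR: "fsub T (Rf F S E)" and Tcf: "conflict_free (local_faf F S E) T"
    and ET: "fsub (finter E S) T"
  shows "conflict_free F (\<lambda>x. max (E x) (T x))"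
  unfolding conflict_free_def
proof (intro notI, elim exE conjE)
  note no_attack = join_local_no_attack_on_local[OF E S TR Tcf ET]
  fix p \<alpha> q \<beta>
  assume p: "fpt_in p \<alpha> (\<lambda>x. max (E x) (T x))" and q: "fpt_in q \<beta> (\<lambda>x. max (E x) (T x))"
    and suff: "sufficient F p \<alpha> q \<beta>"
  consider "fpt_in q \<beta> T" | "fpt_in q \<beta> E" "fpt_in p \<alpha> E" | "fpt_in q \<beta> E" "fpt_in p \<alpha> T"
    using fpt_in_max[OF p] fpt_in_max[OF q] by blast
  then show False
  proof cases
    case 1
    then show False
      using no_attack[OF p] suff by blast
  next
    case 2
    then show False
      using cf suff unfolding conflict_free_def by blast
  next
    case 3
    obtain d e where d: "fpt_in d e E" "tolerable F p (weaken F d e p \<alpha>) q \<beta>"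
      using df[OF 3(1)] fpt_in_fsub[OF 3(2) fsub_trans[OF TR fsub_Rf]] suff
      unfolding wdefends_def by blast
    have "sufficient F d e p \<alpha>"
      using suff d(2) by (rule sufficient_of_weaken_tolerable)
    moreover have "fpt_in d e (\<lambda>x. max (E x) (T x))"
      using d(1) by (rule fpt_in_mono) simp
    ultimately show False
      using no_attack[OF _ 3(2)] by blast
  qed
qed

lemma AE_join_local:
  assumes EA: "E \<in> AE F C" and S: "S \<in> SCCS F"
    and TA: "T \<in> AE (local_faf F S E) (finter (Df F S E) C)" and ET: "fsub (finter E S) T"
  shows "(\<lambda>x. max (E x) (T x)) \<in> AE F C"
proof -
  have E: "fsub E (fa F)" and cf: "conflict_free F E" and EC: "fsub E C"
    and df: "\<And>A a. fpt_in A a E \<Longrightarrow> wdefends F E A a"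
    using EA unfolding AE_iff by auto
  have TR: "fsub T (Rf F S E)" and Tcf: "conflict_free (local_faf F S E) T"
    and Tdf: "\<And>A a. fpt_in A a T \<Longrightarrow> wdefends (local_faf F S E) T A a"
    and TC: "fsub T (finter (Df F S E) C)"
    using TA unfolding AE_local_iff by auto
  let ?J = "\<lambda>x. max (E x) (T x)"
  have "fsub ?J (fa F)" "fsub ?J C"
    using fsub_max[OF E fsub_trans[OF TR fsub_Rf]] fsub_max[OF EC fsub_finterD2[OF TC]] .
  moreover have "conflict_free F ?J"
    using conflict_free_join_local[OF E cf df S TR Tcf ET] .
  moreover have "wdefends F ?J q \<beta>" if "fpt_in q \<beta> ?J" for q \<beta>
  proof (cases "fpt_in q \<beta> E")
    case True
    then show ?thesis
      using df wdefends_mono by (metis max.cobounded1)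
  next
    case False
    then have q: "fpt_in q \<beta> T"
      using fpt_in_max[OF that] by blast
    then have "fpt_in q \<beta> (Df F S E)"
      using fpt_in_fsub[OF q TC] unfolding fpt_in_finter by blast
    then show ?thesis
      using wdefends_globalize[OF E TR _ _ _ Tdf[OF q], of ?J] by simp
  qed
  ultimately show ?thesis
    unfolding AE_iff by blast
qed

lemma PE_restrict_SCC:
  assumes EP: "E \<in> PE F C" and S: "S \<in> SCCS F"
  shows "finter E S \<in> PE (local_faf F S E) (finter (Df F S E) C)"
proof -
  have EA: "E \<in> AE F C" and maximal: "\<And>E'. E' \<in> AE F C \<Longrightarrow> fsub E E' \<Longrightarrow> E' = E"
    using EP unfolding PE_iff by auto
  have E: "fsub E (fa F)"
    using EA unfolding AE_iff by blast
  have "T = finter E S" if TA: "T \<in> AE (local_faf F S E) (finter (Df F S E) C)"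
    and ET: "fsub (finter E S) T" for T
  proof
    fix y
    have "fsub E (\<lambda>x. max (E x) (T x))"
      using fsub_nonneg[OF E] unfolding fsub_def by simp
    then have join: "(\<lambda>x. max (E x) (T x)) = E"
      using maximal AE_join_local[OF EA S TA ET] by blast
    have TR: "fsub T (Rf F S E)"
      using TA unfolding AE_local_iff by blast
    show "T y = finter E S y"
    proof (cases "y \<in> Supp S")
      case True
      then have "T y \<le> E y"
        using fun_cong[OF join, of y] by simp
      then show ?thesis
        using fsub_le[OF ET, of y] finter_SCCS_in[OF S True E] by simp
    next
      case False
      then have "Rf F S E y = 0"
        unfolding Rf_def by simp
      then show ?thesis
        using fsub_le[OF TR, of y] fsub_nonneg[OF TR, of y] finter_SCCS_out[OF S False E] by simp
    qed
  qed
  then show ?thesis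
    unfolding PE_iff using AE_restrict_SCC[OF EA S] by blast
qed

lemma PE_of_SCC_parts:
  assumes C: "fsub C (fa F)" and E: "fsub E (fa F)"
    and parts: "\<And>S. S \<in> SCCS F \<Longrightarrow> finter E S \<in> PE (local_faf F S E) (finter (Df F S E) C)"
  shows "E \<in> PE F C"
proof -
  have EA: "E \<in> AE F C"
    using AE_of_SCC_parts[OF C E] parts unfolding PE_iff by blast
  have "E' = E" if E'A: "E' \<in> AE F C" and EE': "fsub E E'" for E'
  proof (rule eq_if_SCC_parts_eq)
    show E': "fsub E' (fa F)"
      using E'A unfolding AE_iff by blast
    fix S assume S: "S \<in> SCCS F" and R: "Rf F S E' = Rf F S E" and D: "Df F S E' = Df F S E"
    have "finter E' S \<in> AE (local_faf F S E) (finter (Df F S E) C)"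
      using AE_restrict_SCC[OF E'A S] R D by simp
    moreover have "fsub (finter E S) (finter E' S)"
      unfolding fsub_def
    proof
      fix y
      show "0 \<le> finter E S y \<and> finter E S y \<le> finter E' S y"
        using fsub_le[OF EE', of y] fsub_nonneg[OF E, of y] SCCS_nonneg[OF S, of y]
        by (simp add: min_le_iff_disj)
    qed
    ultimately show "finter E' S = finter E S"
      using parts[OF S] unfolding PE_iff by blast
  qed (rule E)
  then show ?thesis
    unfolding PE_iff using EA by blast
qed

lemma PE_SCC_decomposition:
  "fsub C (fa F) \<Longrightarrow> PE F C =
    {E. fsub E (fa F) \<and> (\<forall>S\<in>SCCS F. finter E S \<in> PE (local_faf F S E) (finter (Df F S E) C))}"
  using PE_restrict_SCC PE_of_SCC_parts PE_iff AE_iff by blast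

lemma fsub_finter_Df_Rf: "fsub C (fa F) \<Longrightarrow> fsub (finter (Df F S E) C) (Rf F S E)"
  unfolding fsub_def using Df_nonneg Df_le_Rf by (simp add: min.coboundedI1)

lemma card_Supp_Rf_less:
  assumes S: "S \<in> SCCS F" and several: "card (SCCS F) \<noteq> 1"
  shows "card (Supp (Rf F S E)) < card (args F)"
proof -
  obtain A where A: "A \<in> args F" "S = SCC F A"
    using S unfolding SCCS_def by blast
  have S_args: "Supp S \<subseteq> args F"
    using SCCS_Supp_args[OF S] by blast
  have "Supp S \<noteq> args F"
  proof
    assume all: "Supp S = args F"
    have "SCC F A' = S" if "A' \<in> args F" for A'
    proof
      fix B
      have "A' \<in> Supp (SCC F A)"
        using that all A(2) by simp
      then have A'A: "pequiv F A' A"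
        by (simp add: Supp_SCC)
      have "pequiv F B A' \<longleftrightarrow> pequiv F B A"
        using pequiv_trans[OF _ A'A] pequiv_trans[OF _ pequiv_sym[OF A'A]] by blast
      then show "SCC F A' B = S B"
        unfolding A(2) SCC_def by simp
    qed
    then have "SCCS F = {S}"
      using S unfolding SCCS_def by blast
    then show False
      using several by simp
  qed
  then have "card (Supp S) < card (args F)"
    using S_args finite_args by (simp add: psubset_card_mono psubsetI)
  moreover have "card (Supp (Rf F S E)) \<le> card (Supp S)"
    using Supp_Rf_subset finite_subset[OF S_args finite_args] by (rule card_mono[rotated])
  ultimately show ?thesis
    by simp
qed

end

subsection \<open>The grounded extension\<close>

definition unattacked :: "'a faf \<Rightarrow> 'a fz \<Rightarrow> 'a fz \<Rightarrow> 'a fz" where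
  "unattacked F U T = funion (\<lambda>x a. fpt_in x a T \<and> (\<forall>B b. fpt_in B b U \<longrightarrow> \<not> sufficient F B b x a))"

lemma unattacked_nonneg: "0 \<le> unattacked F U T x"
  unfolding unattacked_def by (rule funion_nonneg) (simp add: fpt_in_def)

lemma unattacked_le: "0 \<le> T x \<Longrightarrow> unattacked F U T x \<le> T x"
  unfolding unattacked_def by (rule funion_least) (simp_all add: fpt_in_def)

lemma unattacked_upper:
  "fpt_in x a T \<Longrightarrow> (\<And>B b. fpt_in B b U \<Longrightarrow> \<not> sufficient F B b x a) \<Longrightarrow> a \<le> unattacked F U T x"
  unfolding unattacked_def by (rule funion_upper) (auto simp: fpt_in_def)

text \<open>Sufficiency is an open condition on the degree of the target, so the supremum of
  unattacked degrees is unattacked as well.\<close>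

lemma unattacked_not_sufficient:
  assumes a: "0 < a" "a \<le> unattacked F U T x" and B: "fpt_in B b U"
  shows "\<not> sufficient F B b x a"
proof
  assume "sufficient F B b x a"
  then have d: "0 < min b (rho F B x) + a - 1"
    unfolding sufficient_def by simp
  obtain a' where a': "a - (min b (rho F B x) + a - 1) < a'" "fpt_in x a' T"
      "\<forall>B b. fpt_in B b U \<longrightarrow> \<not> sufficient F B b x a'"
    using funion_approx[OF a[unfolded unattacked_def] _ d] by (auto simp: fpt_in_def)
  then have "sufficient F B b x a'"
    unfolding sufficient_def by simp
  then show False
    using a'(3) B by blast
qed

context wf_framework
begin

context
  fixes C :: "'a fz"
  assumes C: "fsub C (fa F)"
begin

lemma Fop_nonneg: "0 \<le> Fop F C T x"
  unfolding Fop_def by (rule funion_nonneg) (simp add: fpt_in_def)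

lemma Fop_le: "Fop F C T x \<le> C x"
  unfolding Fop_def by (rule funion_least) (auto simp: fpt_in_def fsub_nonneg[OF C])

lemma Fop_upper: "fpt_in x a C \<Longrightarrow> wdefends F T x a \<Longrightarrow> a \<le> Fop F C T x"
  unfolding Fop_def by (rule funion_upper) (auto simp: fpt_in_def)

lemma Fop_mono:
  assumes le: "\<And>y. T y \<le> T' y"
  shows "Fop F C T x \<le> Fop F C T' x"
  unfolding Fop_def[of F C T]
proof (rule funion_least)
  fix a assume "fpt_in x a C \<and> wdefends F T x a"
  then show "a \<le> Fop F C T' x"
    using Fop_upper wdefends_mono[of F T x a T', OF _ le] by blast
qed (rule Fop_nonneg)

lemma fpt_in_Fop_iff:
  "fsub T (fa F) \<Longrightarrow> fpt_in x a (Fop F C T) \<longleftrightarrow> fpt_in x a C \<and> wdefends F T x a"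
  unfolding Fop_eq_funion wdefends_eq_defends_against
  using finite_pos_fsub_fa fsub_fa_le1 fsub_nonneg[OF C]
  by (rule fpt_in_funion_defended_iff)

text \<open>Knaster--Tarski: the pointwise infimum of the pre-fixed points below \<open>C\<close>.\<close>

lemma Fop_least_fixpoint:
  obtains m where "Fop F C m = m" "fsub m C"
    "\<And>Y x. fsub Y C \<Longrightarrow> (\<And>y. Fop F C Y y \<le> Y y) \<Longrightarrow> m x \<le> Y x"
proof -
  define P where "P = {X. fsub X C \<and> (\<forall>x. Fop F C X x \<le> X x)}"
  define m where "m = (\<lambda>x. Inf ((\<lambda>X. X x) ` P))"
  have CP: "C \<in> P"
    unfolding P_def using fsub_self[OF C] Fop_le by blast
  have m_le: "m x \<le> X x" if X: "X \<in> P" for X x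
  proof -
    have "bdd_below ((\<lambda>X. X x) ` P)"
      by (rule bdd_belowI[of _ 0]) (auto simp: P_def fsub_def)
    then show ?thesis
      unfolding m_def using X by (auto intro: cInf_lower)
  qed
  have m_ge: "z \<le> m x" if "\<And>X. X \<in> P \<Longrightarrow> z \<le> X x" for z x
    unfolding m_def using CP that by (intro cInf_greatest) auto
  have Fm: "Fop F C m x \<le> m x" for x
  proof (rule m_ge)
    fix X assume X: "X \<in> P"
    have "Fop F C m x \<le> Fop F C X x"
      using Fop_mono m_le[OF X] by blast
    also have "\<dots> \<le> X x"
      using X unfolding P_def by blast
    finally show "Fop F C m x \<le> X x" .
  qed
  have "Fop F C m \<in> P"
    unfolding P_def fsub_def using Fop_nonneg Fop_le Fop_mono[of "Fop F C m" m, OF Fm] by blast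
  then have "Fop F C m = m"
    using Fm m_le by (intro ext order.antisym) auto
  moreover have "fsub m C"
    unfolding fsub_def using m_ge[of 0] m_le[OF CP] by (auto simp: P_def fsub_def)
  moreover have "m x \<le> Y x" if "fsub Y C" "\<And>y. Fop F C Y y \<le> Y y" for Y x
    using m_le that unfolding P_def by blast
  ultimately show ?thesis
    using that by blast
qed

lemma GE_least_fixpoint:
  "Fop F C (GE F C) = GE F C \<and> fsub (GE F C) C
    \<and> (\<forall>Y. fsub Y C \<longrightarrow> (\<forall>y. Fop F C Y y \<le> Y y) \<longrightarrow> (\<forall>x. GE F C x \<le> Y x))"
proof -
  obtain m where m: "Fop F C m = m" "fsub m C"
    "\<And>Y x. fsub Y C \<Longrightarrow> (\<And>y. Fop F C Y y \<le> Y y) \<Longrightarrow> m x \<le> Y x"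
    using Fop_least_fixpoint by blast
  have fixpoint_fsub: "fsub E C" if "Fop F C E = E" for E
    unfolding fsub_def using Fop_nonneg[of E] Fop_le[of E] that by simp
  have "GE F C = m"
    unfolding GE_def
  proof (rule the_equality)
    show "Fop F C m = m \<and> (\<forall>E'. Fop F C E' = E' \<longrightarrow> (\<forall>x. m x \<le> E' x))"
      using m fixpoint_fsub by simp
    fix E assume "Fop F C E = E \<and> (\<forall>E'. Fop F C E' = E' \<longrightarrow> (\<forall>x. E x \<le> E' x))"
    then show "E = m"
      using m fixpoint_fsub by (intro ext order.antisym) simp_all
  qed
  then show ?thesis
    using m by auto
qed

lemma GE_fixpoint: "Fop F C (GE F C) = GE F C"
  using GE_least_fixpoint by blast

lemma GE_fsub: "fsub (GE F C) C"
  using GE_least_fixpoint by blast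

lemma GE_least: "fsub Y C \<Longrightarrow> (\<And>y. Fop F C Y y \<le> Y y) \<Longrightarrow> GE F C x \<le> Y x"
  using GE_least_fixpoint by blast

lemma GE_fsub_fa: "fsub (GE F C) (fa F)"
  using GE_fsub C by (rule fsub_trans)

lemma fpt_in_GE_iff: "fpt_in x a (GE F C) \<longleftrightarrow> fpt_in x a C \<and> wdefends F (GE F C) x a"
  using fpt_in_Fop_iff[OF GE_fsub_fa] GE_fixpoint by simp

text \<open>The part of the grounded extension that it does not attack sufficiently is again a
  pre-fixed point: an attacker of a point defended by that part is tamed by it, and the tamer
  would be attacked by the grounded extension, which defends the attacker.\<close>

lemma Fop_unattacked_GE_le:
  "Fop F C (unattacked F (GE F C) (GE F C)) x \<le> unattacked F (GE F C) (GE F C) x"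
  unfolding Fop_def
proof (rule funion_least)
  let ?g = "GE F C"
  let ?Y = "unattacked F ?g ?g"
  have Yg: "?Y y \<le> ?g y" for y
    using fsub_nonneg[OF GE_fsub] by (rule unattacked_le)
  fix a assume xa: "fpt_in x a C \<and> wdefends F ?Y x a"
  then have ag: "fpt_in x a ?g"
    unfolding fpt_in_GE_iff using wdefends_mono[of F ?Y x a ?g, OF _ Yg] by blast
  have "\<not> sufficient F B b x a" if B: "fpt_in B b ?g" for B b
  proof
    assume suff: "sufficient F B b x a"
    obtain d e where d: "fpt_in d e ?Y" "tolerable F B (weaken F d e B b) x a"
      using xa suff fpt_in_fsub[OF B GE_fsub_fa] unfolding wdefends_def by blast
    have "sufficient F d e B b"
      using suff d(2) by (rule sufficient_of_weaken_tolerable)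
    moreover have "wdefends F ?g B b"
      using B fpt_in_GE_iff by blast
    moreover have "fpt_in d e (fa F)"
      using fpt_in_fsub[OF fpt_in_mono[OF d(1) Yg] GE_fsub_fa] .
    ultimately obtain d' e' where d': "fpt_in d' e' ?g" "tolerable F d (weaken F d' e' d e) B b"
      unfolding wdefends_def by blast
    have "sufficient F d' e' d e"
      using \<open>sufficient F d e B b\<close> d'(2) by (rule sufficient_of_weaken_tolerable)
    moreover have "\<not> sufficient F d' e' d e"
      using d(1) unfolding fpt_in_def by (intro unattacked_not_sufficient[OF _ _ d'(1)]) auto
    ultimately show False
      by contradiction
  qed
  then show "a \<le> ?Y x"
    using ag by (rule unattacked_upper[rotated])
qed (rule unattacked_nonneg)

lemma GE_conflict_free: "conflict_free F (GE F C)"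
  unfolding conflict_free_def
proof (intro notI, elim exE conjE)
  let ?g = "GE F C"
  let ?Y = "unattacked F ?g ?g"
  have Yg: "?Y y \<le> ?g y" for y
    using fsub_nonneg[OF GE_fsub] by (rule unattacked_le)
  have "fsub ?Y C"
    unfolding fsub_def
  proof
    fix y
    show "0 \<le> ?Y y \<and> ?Y y \<le> C y"
      using unattacked_nonneg[of F ?g ?g y] Yg[of y] fsub_le[OF GE_fsub, of y] by linarith
  qed
  then have gY: "?g y \<le> ?Y y" for y
    using GE_least Fop_unattacked_GE_le by blast
  fix A a B b assume A: "fpt_in A a ?g" and B: "fpt_in B b ?g" and suff: "sufficient F A a B b"
  have "0 < b" "b \<le> ?Y B"
    using B gY[of B] unfolding fpt_in_def by auto
  then show False
    using unattacked_not_sufficient[OF _ _ A] suff by blast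
qed

lemma GE_CE: "GE F C \<in> CE F C"
  unfolding CE_iff AE_iff using GE_fsub_fa GE_conflict_free GE_fsub fpt_in_GE_iff by blast

lemma GE_le_CE:
  assumes E: "E \<in> CE F C"
  shows "GE F C x \<le> E x"
proof (rule GE_least)
  show EC: "fsub E C"
    using E unfolding CE_iff AE_iff by blast
  show "Fop F C E y \<le> E y" for y
    unfolding Fop_def
    by (rule funion_least) (use E fsub_nonneg[OF EC] in \<open>auto simp: CE_iff fpt_in_def\<close>)
qed

end

lemma Fop_le_local_GE:
  assumes C: "fsub C (fa F)" and S: "S \<in> SCCS F" and X: "fsub X (GE F C)"
    and XS: "\<And>y. finter X S y \<le> GE (local_faf F S (GE F C)) (finter (Df F S (GE F C)) C) y"
    and x: "x \<in> Supp S"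
  shows "Fop F C X x \<le> GE (local_faf F S (GE F C)) (finter (Df F S (GE F C)) C) x"
proof -
  let ?g = "GE F C"
  let ?C' = "finter (Df F S ?g) C"
  let ?m = "GE (local_faf F S ?g) ?C'"
  interpret L: wf_framework "local_faf F S ?g"
    by (rule wf_framework_local)
  have C': "fsub ?C' (fa (local_faf F S ?g))"
    using fsub_finter_Df_Rf[OF C] by simp
  have g: "fsub ?g (fa F)" and gcf: "conflict_free F ?g"
    using GE_fsub_fa[OF C] GE_conflict_free[OF C] .
  show ?thesis
    unfolding Fop_def
  proof (rule funion_least)
    fix a assume h: "fpt_in x a C \<and> wdefends F X x a"
    then have xa: "fpt_in x a (fa F)"
      using fpt_in_fsub[OF _ C] by blast
    have "wdefends (local_faf F S ?g) (finter X S) x a"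
      using wdefends_localize[OF S g gcf X xa] h by blast
    then have "wdefends (local_faf F S ?g) ?m x a"
      using XS by (rule wdefends_mono)
    moreover have "fpt_in x a ?C'"
      using wdefends_imp_fpt_in_Df[OF g gcf X x xa] h by (simp add: fpt_in_finter)
    ultimately have "a \<le> Fop (local_faf F S ?g) ?C' ?m x"
      using L.Fop_upper[OF C'] by blast
    then show "a \<le> ?m x"
      using L.GE_fixpoint[OF C'] by simp
  qed (rule fsub_nonneg[OF L.GE_fsub[OF C']])
qed

text \<open>Lowering the grounded extension on \<open>S\<close> to the local grounded extension gives a
  pre-fixed point, so by leastness nothing is actually lowered.\<close>

lemma finter_GE_le_local_GE:
  assumes C: "fsub C (fa F)" and S: "S \<in> SCCS F"
  shows "finter (GE F C) S y \<le> GE (local_faf F S (GE F C)) (finter (Df F S (GE F C)) C) y"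
proof -
  let ?g = "GE F C"
  let ?m = "GE (local_faf F S ?g) (finter (Df F S ?g) C)"
  interpret L: wf_framework "local_faf F S ?g"
    by (rule wf_framework_local)
  have m_nonneg: "0 \<le> ?m y" for y
    using fsub_nonneg[OF L.GE_fsub] fsub_finter_Df_Rf[OF C] by simp
  define X where "X = (\<lambda>x. if x \<in> Supp S then min (?g x) (?m x) else ?g x)"
  have X: "fsub X ?g"
    unfolding fsub_def X_def using fsub_nonneg[OF GE_fsub[OF C]] m_nonneg by simp
  have XS: "finter X S y \<le> ?m y" for y
    using finter_SCCS_out[OF S _ X, of y] m_nonneg[of y] unfolding X_def
    by (cases "y \<in> Supp S") (simp_all add: min_le_iff_disj)
  have "Fop F C X x \<le> X x" for x
  proof -
    have "Fop F C X x \<le> Fop F C ?g x"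
      using C fsub_le[OF X] by (rule Fop_mono)
    then have "Fop F C X x \<le> ?g x"
      unfolding GE_fixpoint[OF C] .
    moreover have "x \<in> Supp S \<Longrightarrow> Fop F C X x \<le> ?m x"
      using Fop_le_local_GE[OF C S X XS] .
    moreover have "X x = (if x \<in> Supp S then min (?g x) (?m x) else ?g x)"
      unfolding X_def ..
    ultimately show ?thesis
      by (cases "x \<in> Supp S") simp_all
  qed
  then have "?g y \<le> X y"
    using GE_least[OF C fsub_trans[OF X GE_fsub[OF C]]] by blast
  then show ?thesis
    using finter_SCCS_out[OF S _ GE_fsub[OF C], of y] m_nonneg[of y] unfolding X_def
    by (cases "y \<in> Supp S") (simp_all add: min_le_iff_disj)
qed

lemma GE_restrict_SCC:
  assumes C: "fsub C (fa F)" and S: "S \<in> SCCS F"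
  shows "finter (GE F C) S = GE (local_faf F S (GE F C)) (finter (Df F S (GE F C)) C)"
proof (intro ext order.antisym)
  interpret L: wf_framework "local_faf F S (GE F C)"
    by (rule wf_framework_local)
  fix y
  show "finter (GE F C) S y \<le> GE (local_faf F S (GE F C)) (finter (Df F S (GE F C)) C) y"
    using C S by (rule finter_GE_le_local_GE)
  show "GE (local_faf F S (GE F C)) (finter (Df F S (GE F C)) C) y \<le> finter (GE F C) S y"
    using fsub_finter_Df_Rf[OF C] CE_restrict_SCC[OF GE_CE[OF C] S] by (intro L.GE_le_CE) simp_all
qed

lemma GE_of_SCC_parts:
  assumes C: "fsub C (fa F)" and E: "fsub E (fa F)"
    and parts: "\<And>S. S \<in> SCCS F \<Longrightarrow> finter E S = GE (local_faf F S E) (finter (Df F S E) C)"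
  shows "E = GE F C"
proof (rule eq_if_SCC_parts_eq[OF E GE_fsub_fa[OF C]])
  fix S assume S: "S \<in> SCCS F" and "Rf F S E = Rf F S (GE F C)" "Df F S E = Df F S (GE F C)"
  then show "finter E S = finter (GE F C) S"
    using parts[OF S] GE_restrict_SCC[OF C S] by simp
qed

lemma GE_SCC_decomposition:
  "fsub C (fa F) \<Longrightarrow> {GE F C} =
    {E. fsub E (fa F) \<and> (\<forall>S\<in>SCCS F. finter E S \<in> {GE (local_faf F S E) (finter (Df F S E) C)})}"
  using GE_restrict_SCC GE_of_SCC_parts GE_fsub_fa by auto

end

definition SCC_decomposable :: "'a basefun \<Rightarrow> bool" where
  "SCC_decomposable bf \<longleftrightarrow> (\<forall>F C. wf_framework F \<longrightarrow> fsub C (fa F) \<longrightarrow> bf F C =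
     {E. fsub E (fa F) \<and> (\<forall>S\<in>SCCS F. finter E S \<in> bf (local_faf F S E) (finter (Df F S E) C))})"

lemma GFf_eq_base:
  assumes bf: "SCC_decomposable bf"
  shows "wf_framework F \<Longrightarrow> fsub C (fa F) \<Longrightarrow> card (args F) \<le> n \<Longrightarrow> GFf n bf F C = bf F C"
proof (induction n arbitrary: F C)
  case 0
  then have "SCCS F = {}"
    using wf_framework.finite_args unfolding SCCS_def by fastforce
  then show ?case
    using bf 0 unfolding SCC_decomposable_def by simp
next
  case (Suc n)
  have decomp: "bf F C =
      {E. fsub E (fa F) \<and> (\<forall>S\<in>SCCS F. finter E S \<in> bf (local_faf F S E) (finter (Df F S E) C))}"
    using bf Suc.prems unfolding SCC_decomposable_def by blast
  show ?case
  proof (cases "card (SCCS F) = 1")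
    case True
    then show ?thesis
      using decomp by auto
  next
    case False
    have "GFf n bf (local_faf F S E) (finter (Df F S E) C) = bf (local_faf F S E) (finter (Df F S E) C)"
      if "S \<in> SCCS F" for S E
    proof (rule Suc.IH)
      show "wf_framework (local_faf F S E)"
        using Suc.prems(1) by (rule wf_framework.wf_framework_local)
      show "fsub (finter (Df F S E) C) (fa (local_faf F S E))"
        using wf_framework.fsub_finter_Df_Rf[OF Suc.prems(1,2)] by simp
      have "card (Supp (Rf F S E)) < card (args F)"
        using wf_framework.card_Supp_Rf_less[OF Suc.prems(1) that False] .
      then show "card (args (local_faf F S E)) \<le> n"
        using Suc.prems(3) by simp
    qed
    then show ?thesis
      using False decomp by auto
  qed
qed

lemma GF_eq_base: "SCC_decomposable bf \<Longrightarrow> wf_framework F \<Longrightarrow> fsub C (fa F) \<Longrightarrow> GF bf F C = bf F C"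
  unfolding GF_def using GFf_eq_base by blast

lemma SCC_decomposable_BF_AE: "SCC_decomposable BF_AE"
  unfolding SCC_decomposable_def BF_AE_def using wf_framework.AE_SCC_decomposition by blast

lemma SCC_decomposable_BF_CO: "SCC_decomposable BF_CO"
  unfolding SCC_decomposable_def BF_CO_def using wf_framework.CE_SCC_decomposition by blast

lemma SCC_decomposable_BF_PE: "SCC_decomposable BF_PE"
  unfolding SCC_decomposable_def BF_PE_def using wf_framework.PE_SCC_decomposition by blast

lemma SCC_decomposable_BF_GR: "SCC_decomposable BF_GR"
  unfolding SCC_decomposable_def BF_GR_def using wf_framework.GE_SCC_decomposition by blast

theorem mainTheorem8:
  fixes F :: "'a faf"
  assumes "wf_faf F"
  shows "AE0 F = GF BF_AE F (fa F)
       \<and> CE F (fa F) = GF BF_CO F (fa F)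
       \<and> PE F (fa F) = GF BF_PE F (fa F)
       \<and> {GE F (fa F)} = GF BF_GR F (fa F)"
proof -
  have wf: "wf_framework F"
    using assms by (rule wf_framework.intro)
  note GF_eq = GF_eq_base[OF _ wf wf_framework.fsub_fa_refl[OF wf]]
  show ?thesis
    using GF_eq[OF SCC_decomposable_BF_AE] GF_eq[OF SCC_decomposable_BF_CO]
      GF_eq[OF SCC_decomposable_BF_PE] GF_eq[OF SCC_decomposable_BF_GR]
    unfolding AE0_eq_AE_fa BF_AE_def BF_CO_def BF_PE_def BF_GR_def by simp
qed

end
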